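(* Assume the corruption model described in the context, let $\delta\in[0,1]$, and suppose $n\ge K\cdot\frac{d+\log\delta^{-1}}{(\epsilon\log\epsilon^{-1})^2}$ for a sufficiently large absolute constant $K$. Then, for a suitable universal constant $C_4$, with probability at least $1-\frac\delta2$ both of the following hold: (i) $C_4\,\epsilon\log\epsilon^{-1}\,\Sigma\succeq\frac1n\sum_{i\in G'}X_iX_i^\top-\Sigma\succeq-C_4\,\epsilon\log\epsilon^{-1}\,\Sigma$; (ii) for all $w\in\mathfrak{S}^n_{1-\epsilon}$, $C_4\log\epsilon^{-1}\,\Sigma\succeq\sum_{i\in G'}w_i(X_iX_i^\top-\Sigma)\succeq-C_4\log\epsilon^{-1}\,\Sigma$.
   Context: Corruption model: $\mathcal{D}$ is mean-zero on $\mathbb{R}^d$ with covariance $\Sigma$ and sub-Gaussian proxy $\Gamma\preceq c\Sigma$ for a constant $c$ (i.e., $\mathbb{E}[\exp(tX^\top v)]\le\exp(t^2v^\top\Gamma v/2)$ for all unit $v$, $t\in\mathbb{R}$); $\{X_i\}_{i\in G'}$, $|G'|=n$, are i.i.d. samples from $\mathcal{D}$, and $\epsilon$ is the corruption fraction. For $\beta\in[0,1)$, $\mathfrak{S}^n_\beta = \{w\in\mathbb{R}^n_{\ge0}:\|w\|_1=1,\ w_i\le\frac{1}{n(1-\beta)}\ \forall i\}$ (so $\mathfrak{S}^n_{1-\epsilon}$ has the cap $\frac{1}{n\epsilon}$), coordinates indexed by $G'$; $\succeq$ is the Loewner order. *)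

theory Defs
  imports "HOL-Probability.Probability"
begin

text \<open>Vectors in R^d are functions nat => real (coordinates j < d);
  d x d matrices are functions nat => nat => real (entries j,k < d).\<close>

definition quad_form :: "nat \<Rightarrow> (nat \<Rightarrow> nat \<Rightarrow> real) \<Rightarrow> (nat \<Rightarrow> real) \<Rightarrow> real" where
  "quad_form d A v = (\<Sum>j<d. \<Sum>k<d. v j * A j k * v k)"

definition loewner_le :: "nat \<Rightarrow> (nat \<Rightarrow> nat \<Rightarrow> real) \<Rightarrow> (nat \<Rightarrow> nat \<Rightarrow> real) \<Rightarrow> bool" where
  "loewner_le d A B \<longleftrightarrow> (\<forall>v. 0 \<le> quad_form d (\<lambda>j k. B j k - A j k) v)"

definition weight_set :: "nat \<Rightarrow> real \<Rightarrow> (nat \<Rightarrow> real) set" where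
  "weight_set n \<beta> = {w. (\<forall>i<n. 0 \<le> w i \<and> w i \<le> 1 / (real n * (1 - \<beta>))) \<and> (\<Sum>i<n. w i) = 1}"

definition subgauss_model ::
  "real \<Rightarrow> nat \<Rightarrow> (nat \<Rightarrow> real) measure \<Rightarrow> (nat \<Rightarrow> nat \<Rightarrow> real) \<Rightarrow> (nat \<Rightarrow> nat \<Rightarrow> real) \<Rightarrow> bool" where
  "subgauss_model c d D \<Sigma> \<Gamma> \<longleftrightarrow>
     prob_space D \<and>
     sets D = sets (\<Pi>\<^sub>M j\<in>{..<d}. lborel) \<and>
     (\<forall>j<d. integrable D (\<lambda>x. x j) \<and> (\<integral>x. x j \<partial>D) = 0) \<and>
     (\<forall>j<d. \<forall>k<d. integrable D (\<lambda>x. x j * x k) \<and> \<Sigma> j k = (\<integral>x. x j * x k \<partial>D)) \<and>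
     (\<forall>v t. (\<Sum>j<d. (v j)\<^sup>2) = 1 \<longrightarrow>
        (\<integral>\<^sup>+x. ennreal (exp (t * (\<Sum>j<d. x j * v j))) \<partial>D)
          \<le> ennreal (exp (t\<^sup>2 * quad_form d \<Gamma> v / 2))) \<and>
     loewner_le d \<Gamma> (\<lambda>j k. c * \<Sigma> j k)"

end

theory Submission
  imports Defs
begin

text \<open>Gram--Schmidt for the semidefinite form \<open>\<Sigma>\<close> yields vectors \<open>b\<^sub>1, ..., b\<^sub>r\<close> with
  \<open>\<Sigma>(v, y) = \<Sum>\<^sub>l \<Sigma>(v, b\<^sub>l) \<Sigma>(b\<^sub>l, y)\<close>. Almost surely every sample is orthogonal to the kernel of
  \<open>\<Sigma>\<close>, so \<open>\<langle>v, X\<rangle> = \<Sum>\<^sub>l \<Sigma>(v, b\<^sub>l) \<langle>b\<^sub>l, X\<rangle>\<close>, and both claims become bounds on quadratic forms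
  \<open>u \<mapsto> \<Sum>\<^sub>i c\<^sub>i \<langle>u, Z\<^sub>i\<rangle>\<^sup>2\<close> in whitened coordinates, relative to \<open>|u|\<^sup>2\<close>.

  For one direction \<open>a\<close> with \<open>\<sigma> = \<Sigma>(a, a)\<close>, sub-Gaussianity bounds the moments
  \<open>E \<langle>a, X\<rangle>\<^bsup>2k\<^esup> \<le> 2 k! (e c \<sigma>)\<^sup>k\<close>, hence \<open>E exp (\<theta> \<langle>a, X\<rangle>\<^sup>2)\<close>, and Chernoff's inequality on the
  product measure shows that, outside an event of probability \<open>3 exp (-n (\<epsilon> log (1/\<epsilon>))\<^sup>2)\<close>,
  the empirical second moment is within a factor \<open>1 \<plusminus> 4 e c \<epsilon> log (1/\<epsilon>)\<close> of \<open>\<sigma>\<close> and the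
  squares exceed \<open>T = 2 e c \<sigma> log (1/\<epsilon>)\<close> by less than \<open>12 e c \<epsilon> n \<sigma>\<close> in total. Weights capped
  by \<open>1/(n \<epsilon>)\<close> then put mass at most \<open>T + 12 e c \<sigma>\<close> on the squares.

  A union bound over a lattice net of the ball of radius 2 with \<open>e\<^bsup>O(r)\<^esup>\<close> points, and the
  standard net argument, extend both bounds to all directions.\<close>

definition dotp :: "nat \<Rightarrow> (nat \<Rightarrow> real) \<Rightarrow> (nat \<Rightarrow> real) \<Rightarrow> real" where
  "dotp d a x = (\<Sum>j<d. a j * x j)"

definition bilin :: "nat \<Rightarrow> (nat \<Rightarrow> nat \<Rightarrow> real) \<Rightarrow> (nat \<Rightarrow> real) \<Rightarrow> (nat \<Rightarrow> real) \<Rightarrow> real" where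
  "bilin d S a b = (\<Sum>j<d. \<Sum>k<d. a j * S j k * b k)"

definition basis_vec :: "nat \<Rightarrow> nat \<Rightarrow> real" where
  "basis_vec j = (\<lambda>i. if i = j then 1 else 0)"

lemma quad_form_eq_bilin: "quad_form d S v = bilin d S v v"
  by (simp add: quad_form_def bilin_def)

lemma quad_form_diff: "quad_form d (\<lambda>j k. A j k - B j k) v = quad_form d A v - quad_form d B v"
  unfolding quad_form_def by (simp add: algebra_simps sum_subtractf)

lemma quad_form_scale: "quad_form d (\<lambda>j k. t * A j k) v = t * quad_form d A v"
  unfolding quad_form_def by (simp add: algebra_simps sum_distrib_left)

lemma quad_form_uminus: "quad_form d (\<lambda>j k. - A j k) v = - quad_form d A v"
  using quad_form_scale[of d "-1" A v] by simp

lemma quad_form_sum: "quad_form d (\<lambda>j k. \<Sum>i\<in>I. F i j k) v = (\<Sum>i\<in>I. quad_form d (F i) v)"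
  unfolding quad_form_def by (simp add: sum_distrib_left sum_distrib_right sum.swap[of _ I] mult_ac)

lemma quad_form_outer: "quad_form d (\<lambda>j k. x j * x k) v = (dotp d v x)\<^sup>2"
  unfolding quad_form_def dotp_def power2_eq_square sum_product by (intro sum.cong refl) (simp add: mult_ac)

lemma loewner_le_iff_quad_form: "loewner_le d A B \<longleftrightarrow> (\<forall>v. quad_form d A v \<le> quad_form d B v)"
  unfolding loewner_le_def by (simp add: quad_form_diff)

lemma bilin_eq_dotp_left: "bilin d S a b = dotp d a (\<lambda>j. \<Sum>k<d. S j k * b k)"
  unfolding bilin_def dotp_def by (simp add: sum_distrib_left mult.assoc)

lemma bilin_eq_dotp_right: "bilin d S a b = dotp d b (\<lambda>k. \<Sum>j<d. a j * S j k)"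
  unfolding bilin_def dotp_def by (subst sum.swap) (simp add: sum_distrib_left mult_ac)

lemma dotp_diff_left: "dotp d (\<lambda>i. a i - b i) x = dotp d a x - dotp d b x"
  unfolding dotp_def by (simp add: algebra_simps sum_subtractf)

lemma dotp_add_left: "dotp d (\<lambda>i. a i + b i) x = dotp d a x + dotp d b x"
  unfolding dotp_def by (simp add: algebra_simps sum.distrib)

lemma dotp_scale_left: "dotp d (\<lambda>i. t * a i) x = t * dotp d a x"
  unfolding dotp_def by (simp add: sum_distrib_left mult_ac)

lemma dotp_sum_left: "dotp d (\<lambda>i. \<Sum>l\<in>L. f l i) x = (\<Sum>l\<in>L. dotp d (f l) x)"
  unfolding dotp_def by (simp add: sum_distrib_right sum.swap[of _ L])

lemma dotp_basis_vec:
  assumes "j < d" shows "dotp d (basis_vec j) x = x j"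
proof -
  have "dotp d (basis_vec j) x = (\<Sum>i<d. if i = j then x i else 0)"
    unfolding dotp_def basis_vec_def by (intro sum.cong) auto
  then show ?thesis using assms by (simp add: sum.delta)
qed

lemma dotp_eq_sum_basis_vec: "dotp d v x = (\<Sum>j<d. v j * dotp d (basis_vec j) x)"
  unfolding dotp_def by (intro sum.cong refl) (simp add: dotp_basis_vec[unfolded dotp_def])

lemmas bilin_left_linear =
  dotp_diff_left[of d _ _ "\<lambda>j. \<Sum>k<d. S j k * y k", folded bilin_eq_dotp_left]
  dotp_add_left[of d _ _ "\<lambda>j. \<Sum>k<d. S j k * y k", folded bilin_eq_dotp_left]
  dotp_scale_left[of d _ _ "\<lambda>j. \<Sum>k<d. S j k * y k", folded bilin_eq_dotp_left]
  dotp_sum_left[of d _ _ "\<lambda>j. \<Sum>k<d. S j k * y k", folded bilin_eq_dotp_left]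
  for d S y

lemmas bilin_right_linear =
  dotp_diff_left[of d _ _ "\<lambda>k. \<Sum>j<d. y j * S j k", folded bilin_eq_dotp_right]
  dotp_add_left[of d _ _ "\<lambda>k. \<Sum>j<d. y j * S j k", folded bilin_eq_dotp_right]
  dotp_scale_left[of d _ _ "\<lambda>k. \<Sum>j<d. y j * S j k", folded bilin_eq_dotp_right]
  dotp_sum_left[of d _ _ "\<lambda>k. \<Sum>j<d. y j * S j k", folded bilin_eq_dotp_right]
  for d S y

lemma bilin_eq_sum_basis_vec: "bilin d S v y = (\<Sum>j<d. v j * bilin d S (basis_vec j) y)"
  unfolding bilin_eq_dotp_left by (rule dotp_eq_sum_basis_vec)

definition symmetric_mat :: "nat \<Rightarrow> (nat \<Rightarrow> nat \<Rightarrow> real) \<Rightarrow> bool" where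
  "symmetric_mat d S \<longleftrightarrow> (\<forall>j<d. \<forall>k<d. S j k = S k j)"

lemma bilin_commute: "symmetric_mat d S \<Longrightarrow> bilin d S a b = bilin d S b a"
  unfolding bilin_def symmetric_mat_def by (subst sum.swap) (auto intro!: sum.cong simp: mult_ac)

lemma bilin_isotropic_eq_0:
  assumes symmetric: "symmetric_mat d S"
    and psd: "\<And>v. 0 \<le> bilin d S v v" and iso: "bilin d S x x = 0"
  shows "bilin d S x y = 0"
proof (rule ccontr)
  define \<beta> where "\<beta> = bilin d S x y"
  define P where "P = bilin d S y y + 1"
  assume "bilin d S x y \<noteq> 0"
  then have "\<beta>\<^sup>2 > 0" unfolding \<beta>_def by simp
  have "P > 0" unfolding P_def using psd[of y] by linarith
  define t where "t = - \<beta> / P"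
  have "bilin d S y x = \<beta>" unfolding \<beta>_def using symmetric by (rule bilin_commute)
  have "0 \<le> bilin d S (\<lambda>i. x i + t * y i) (\<lambda>i. x i + t * y i)" by (rule psd)
  also have "\<dots> = 2 * t * \<beta> + t\<^sup>2 * (P - 1)"
    using \<open>bilin d S y x = \<beta>\<close> iso
    by (simp add: bilin_left_linear bilin_right_linear \<beta>_def P_def power2_eq_square algebra_simps)
  also have "\<dots> \<le> 2 * t * \<beta> + t\<^sup>2 * P" by (simp add: right_diff_distrib)
  also have "\<dots> = - \<beta>\<^sup>2 / P"
    unfolding t_def using \<open>P > 0\<close> by (simp add: field_simps power2_eq_square)
  also have "\<dots> < 0" using \<open>\<beta>\<^sup>2 > 0\<close> \<open>P > 0\<close> by simp
  finally show False by simp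
qed

lemma quad_form_empirical_cov:
  "quad_form d (\<lambda>j k. (1 / real n) * (\<Sum>i<n. X i j * X i k) - S j k) v =
     (\<Sum>i<n. (dotp d v (X i))\<^sup>2) / real n - quad_form d S v"
  unfolding quad_form_diff quad_form_scale quad_form_sum quad_form_outer by simp

lemma quad_form_weighted_cov:
  "quad_form d (\<lambda>j k. \<Sum>i<n. w i * (X i j * X i k - S j k)) v =
     (\<Sum>i<n. w i * (dotp d v (X i))\<^sup>2) - (\<Sum>i<n. w i) * quad_form d S v"
  unfolding right_diff_distrib quad_form_sum quad_form_diff quad_form_scale quad_form_outer
  by (simp add: sum_subtractf sum_distrib_right)

lemma loewner_empirical_cov_bounds:
  assumes "\<And>v. \<bar>(\<Sum>i<n. (dotp d v (X i))\<^sup>2) / real n - quad_form d S v\<bar> \<le> t * quad_form d S v"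
  shows "loewner_le d (\<lambda>j k. (1 / real n) * (\<Sum>i<n. X i j * X i k) - S j k) (\<lambda>j k. t * S j k)"
    and "loewner_le d (\<lambda>j k. - (t * S j k)) (\<lambda>j k. (1 / real n) * (\<Sum>i<n. X i j * X i k) - S j k)"
proof -
  have "(\<Sum>i<n. (dotp d v (X i))\<^sup>2) / real n - quad_form d S v \<le> t * quad_form d S v \<and>
      - (t * quad_form d S v) \<le> (\<Sum>i<n. (dotp d v (X i))\<^sup>2) / real n - quad_form d S v" for v
    using assms[of v] unfolding abs_le_iff by linarith
  then show "loewner_le d (\<lambda>j k. (1 / real n) * (\<Sum>i<n. X i j * X i k) - S j k) (\<lambda>j k. t * S j k)"
    and "loewner_le d (\<lambda>j k. - (t * S j k)) (\<lambda>j k. (1 / real n) * (\<Sum>i<n. X i j * X i k) - S j k)"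
    unfolding loewner_le_iff_quad_form quad_form_empirical_cov quad_form_uminus quad_form_scale by auto
qed

lemma loewner_weighted_cov_bounds:
  assumes psd: "\<And>v. 0 \<le> quad_form d S v" and "1 \<le> t"
    and w: "\<And>i. i < n \<Longrightarrow> 0 \<le> w i" "(\<Sum>i<n. w i) = 1"
    and bound: "\<And>v. (\<Sum>i<n. w i * (dotp d v (X i))\<^sup>2) \<le> t * quad_form d S v"
  shows "loewner_le d (\<lambda>j k. \<Sum>i<n. w i * (X i j * X i k - S j k)) (\<lambda>j k. t * S j k)"
    and "loewner_le d (\<lambda>j k. - (t * S j k)) (\<lambda>j k. \<Sum>i<n. w i * (X i j * X i k - S j k))"
proof -
  have "quad_form d S v \<le> t * quad_form d S v" for v
    using mult_right_mono[OF \<open>1 \<le> t\<close> psd[of v]] by simp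
  moreover have "0 \<le> (\<Sum>i<n. w i * (dotp d v (X i))\<^sup>2)" for v
    using w(1) by (intro sum_nonneg) auto
  ultimately show "loewner_le d (\<lambda>j k. \<Sum>i<n. w i * (X i j * X i k - S j k)) (\<lambda>j k. t * S j k)"
    and "loewner_le d (\<lambda>j k. - (t * S j k)) (\<lambda>j k. \<Sum>i<n. w i * (X i j * X i k - S j k))"
    using bound psd unfolding loewner_le_iff_quad_form quad_form_weighted_cov quad_form_uminus quad_form_scale w(2)
    by (smt (verit))+
qed

section \<open>Gram--Schmidt for a semidefinite form\<close>

definition orthonormal :: "nat \<Rightarrow> (nat \<Rightarrow> nat \<Rightarrow> real) \<Rightarrow> nat \<Rightarrow> (nat \<Rightarrow> nat \<Rightarrow> real) \<Rightarrow> bool" where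
  "orthonormal d S r b \<longleftrightarrow> (\<forall>l<r. \<forall>l'<r. bilin d S (b l) (b l') = (if l = l' then 1 else 0))"

definition parseval :: "nat \<Rightarrow> (nat \<Rightarrow> nat \<Rightarrow> real) \<Rightarrow> nat \<Rightarrow> (nat \<Rightarrow> nat \<Rightarrow> real) \<Rightarrow> (nat \<Rightarrow> real) \<Rightarrow> bool" where
  "parseval d S r b v \<longleftrightarrow> (\<forall>y. bilin d S v y = (\<Sum>l<r. bilin d S v (b l) * bilin d S (b l) y))"

lemma parseval_sum_fun_upd:
  "(\<Sum>l<Suc r. bilin d S v ((b(r := u)) l) * bilin d S ((b(r := u)) l) y) =
     (\<Sum>l<r. bilin d S v (b l) * bilin d S (b l) y) + bilin d S v u * bilin d S u y"
proof -
  have "(\<Sum>l<r. bilin d S v ((b(r := u)) l) * bilin d S ((b(r := u)) l) y) =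
      (\<Sum>l<r. bilin d S v (b l) * bilin d S (b l) y)"
    by (intro sum.cong) auto
  then show ?thesis by simp
qed

lemma orthonormal_fun_upd:
  assumes symmetric: "symmetric_mat d S" and orth: "orthonormal d S r b"
    and "bilin d S u u = 1" and u_b: "\<And>l. l < r \<Longrightarrow> bilin d S u (b l) = 0"
  shows "orthonormal d S (Suc r) (b(r := u))"
  unfolding orthonormal_def
proof (intro allI impI)
  fix l l' assume "l < Suc r" "l' < Suc r"
  then consider "l < r" "l' < r" | "l = r" "l' < r" | "l < r" "l' = r" | "l = r" "l' = r"
    by (auto simp: less_Suc_eq)
  then show "bilin d S ((b(r := u)) l) ((b(r := u)) l') = (if l = l' then 1 else 0)"
  proof cases
    case 3
    then show ?thesis using u_b[of l] bilin_commute[OF symmetric, of u "b l"] by simp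
  qed (use orth u_b \<open>bilin d S u u = 1\<close> in \<open>auto simp: orthonormal_def\<close>)
qed

lemma parseval_fun_upd:
  assumes v: "parseval d S r b v" and b_u: "\<And>l. l < r \<Longrightarrow> bilin d S (b l) u = 0"
  shows "parseval d S (Suc r) (b(r := u)) v"
  unfolding parseval_def parseval_sum_fun_upd
proof
  fix y
  have "bilin d S v u = (\<Sum>l<r. bilin d S v (b l) * bilin d S (b l) u)"
    using v unfolding parseval_def by blast
  also have "\<dots> = 0" by (intro sum.neutral) (simp add: b_u)
  finally have "bilin d S v u = 0" .
  moreover have "bilin d S v y = (\<Sum>l<r. bilin d S v (b l) * bilin d S (b l) y)"
    using v unfolding parseval_def by blast
  ultimately show "bilin d S v y = (\<Sum>l<r. bilin d S v (b l) * bilin d S (b l) y) + bilin d S v u * bilin d S u y"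
    by simp
qed

lemma bilin_orthogonal_component:
  fixes x :: "nat \<Rightarrow> real"
  assumes orth: "orthonormal d S r b"
  defines "w \<equiv> \<lambda>i. x i - (\<Sum>l<r. bilin d S x (b l) * b l i)"
  shows "bilin d S w y = bilin d S x y - (\<Sum>l<r. bilin d S x (b l) * bilin d S (b l) y)"
    and "l' < r \<Longrightarrow> bilin d S w (b l') = 0"
proof -
  show w_y: "bilin d S w y = bilin d S x y - (\<Sum>l<r. bilin d S x (b l) * bilin d S (b l) y)" for y
    unfolding w_def by (simp add: bilin_left_linear)
  assume "l' < r"
  have "(\<Sum>l<r. bilin d S x (b l) * bilin d S (b l) (b l')) =
      (\<Sum>l<r. if l = l' then bilin d S x (b l) else 0)"
    using orth \<open>l' < r\<close> unfolding orthonormal_def by (intro sum.cong) auto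
  also have "\<dots> = bilin d S x (b l')" using \<open>l' < r\<close> by simp
  finally show "bilin d S w (b l') = 0" by (simp add: w_y)
qed

text \<open>One Gram--Schmidt step: normalize the component \<open>w\<close> of \<open>x\<close> orthogonal to the family, or
  drop it when it is isotropic (then it is invisible to the semidefinite form).\<close>

lemma orthonormal_extend_parseval:
  assumes symmetric: "symmetric_mat d S"
    and psd: "\<And>v. 0 \<le> bilin d S v v" and orth: "orthonormal d S r b"
  obtains r' b' where "r' \<le> Suc r" "orthonormal d S r' b'" "parseval d S r' b' x"
    "\<And>v. parseval d S r b v \<Longrightarrow> parseval d S r' b' v"
proof -
  define w where "w = (\<lambda>i. x i - (\<Sum>l<r. bilin d S x (b l) * b l i))"
  note w_y = bilin_orthogonal_component(1)[OF orth, of x, folded w_def]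
  note w_b = bilin_orthogonal_component(2)[OF orth, of _ x, folded w_def]
  define q where "q = bilin d S w w"
  show ?thesis
  proof (cases "q = 0")
    case True
    have "bilin d S w y = 0" for y
      using bilin_isotropic_eq_0[OF symmetric psd, of w] True unfolding q_def by blast
    then have "parseval d S r b x" unfolding parseval_def using w_y by (metis eq_iff_diff_eq_0)
    show ?thesis by (rule that[of r b]) (use orth \<open>parseval d S r b x\<close> in simp_all)
  next
    case False
    then have "q > 0" using psd[of w] q_def by linarith
    define u where "u = (\<lambda>i. (1 / sqrt q) * w i)"
    have u_y: "bilin d S u y = bilin d S w y / sqrt q" for y
      unfolding u_def by (simp only: bilin_left_linear) simp
    have u_b: "bilin d S u (b l) = 0" if "l < r" for l
      using w_b[OF that] by (simp add: u_y)
    have b_u: "bilin d S (b l) u = 0" if "l < r" for l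
      using u_b[OF that] bilin_commute[OF symmetric, of u "b l"] by simp
    have w_u: "bilin d S w u = sqrt q"
      using \<open>q > 0\<close> bilin_commute[OF symmetric, of w u] by (simp add: u_y q_def[symmetric] real_div_sqrt)
    have "(\<Sum>l<r. bilin d S x (b l) * bilin d S (b l) u) = 0" by (intro sum.neutral) (simp add: b_u)
    then have x_u: "bilin d S x u = sqrt q" using w_y[of u] w_u by linarith
    show ?thesis
    proof (rule that[of "Suc r" "b(r := u)"])
      show "orthonormal d S (Suc r) (b(r := u))"
        using \<open>q > 0\<close> w_u u_b by (intro orthonormal_fun_upd[OF symmetric orth]) (simp_all add: u_y)
      show "parseval d S (Suc r) (b(r := u)) x"
        unfolding parseval_def parseval_sum_fun_upd
      proof
        fix y
        have "bilin d S x u * bilin d S u y = bilin d S w y" using \<open>q > 0\<close> by (simp add: x_u u_y)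
        then show "bilin d S x y = (\<Sum>l<r. bilin d S x (b l) * bilin d S (b l) y) + bilin d S x u * bilin d S u y"
          using w_y[of y] by linarith
      qed
    qed (use b_u parseval_fun_upd in auto)
  qed
qed

lemma parseval_if_parseval_basis_vec:
  assumes "\<And>j. j < d \<Longrightarrow> parseval d S r b (basis_vec j)"
  shows "parseval d S r b v"
  unfolding parseval_def
proof
  fix y
  have "bilin d S v y = (\<Sum>j<d. v j * (\<Sum>l<r. bilin d S (basis_vec j) (b l) * bilin d S (b l) y))"
    using assms unfolding parseval_def by (subst bilin_eq_sum_basis_vec) simp
  also have "\<dots> = (\<Sum>l<r. (\<Sum>j<d. v j * bilin d S (basis_vec j) (b l)) * bilin d S (b l) y)"
    by (simp add: sum_distrib_left sum_distrib_right sum.swap[of _ "{..<r}"] mult_ac)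
  finally show "bilin d S v y = (\<Sum>l<r. bilin d S v (b l) * bilin d S (b l) y)"
    by (simp add: bilin_eq_sum_basis_vec[symmetric])
qed

lemma gram_schmidt:
  assumes symmetric: "symmetric_mat d S"
    and psd: "\<And>v. 0 \<le> bilin d S v v"
  obtains r b where "r \<le> d" "orthonormal d S r b" "\<And>v. parseval d S r b v"
proof -
  have "\<exists>r b. r \<le> m \<and> orthonormal d S r b \<and> (\<forall>j<m. parseval d S r b (basis_vec j))" for m
  proof (induction m)
    case 0
    show ?case by (auto simp: orthonormal_def)
  next
    case (Suc m)
    then obtain r b where rb: "r \<le> m" "orthonormal d S r b" "\<forall>j<m. parseval d S r b (basis_vec j)"
      by blast
    obtain r' b' where r'b': "r' \<le> Suc r" "orthonormal d S r' b'" "parseval d S r' b' (basis_vec m)"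
      "\<And>v. parseval d S r b v \<Longrightarrow> parseval d S r' b' v"
      using orthonormal_extend_parseval[OF symmetric psd rb(2), of "basis_vec m"] by blast
    have "\<forall>j<Suc m. parseval d S r' b' (basis_vec j)"
      using rb(3) r'b'(3,4) by (simp add: less_Suc_eq)
    then show ?case using rb(1) r'b'(1,2) by (intro exI[of _ r'] exI[of _ b']) simp
  qed
  then show ?thesis using that parseval_if_parseval_basis_vec by blast
qed

lemma power_div_fact_le_exp:
  fixes x :: real assumes "0 \<le> x"
  shows "x ^ k / fact k \<le> exp x"
proof -
  have sums: "(\<lambda>n. x ^ n / fact n) sums exp x"
    using exp_converges[of x] by (simp add: divide_inverse mult.commute)
  have "x ^ k / fact k \<le> (\<Sum>j<Suc k. x ^ j / fact j)"
    using assms by (intro member_le_sum) auto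
  also have "\<dots> \<le> (\<Sum>n. x ^ n / fact n)"
    using sums assms by (intro sum_le_suminf) (auto simp: sums_iff)
  finally show ?thesis using sums by (simp add: sums_iff)
qed

lemma even_power_le_exp_add:
  fixes t y :: real assumes "0 < t"
  shows "y ^ (2 * k) \<le> fact (2 * k) / t ^ (2 * k) * (exp (t * y) + exp ((- t) * y))"
proof -
  have "(t * \<bar>y\<bar>) ^ (2 * k) / fact (2 * k) \<le> exp (t * \<bar>y\<bar>)"
    using assms by (intro power_div_fact_le_exp) simp
  also have "\<dots> \<le> exp (t * y) + exp ((- t) * y)" by (cases "y \<ge> 0") auto
  finally show ?thesis using assms by (simp add: power_mult_distrib power_even_abs field_simps)
qed

lemma two_div_one_minus_le:
  fixes q :: real assumes "0 \<le> q" "q \<le> 1/2"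
  shows "2 / (1 - q) \<le> 2 + 2 * q + 4 * q\<^sup>2"
proof -
  have "q * q * (2 * q) \<le> q * q * 1" using assms by (intro mult_left_mono) auto
  then have "2 \<le> (1 - q) * (2 + 2 * q + 4 * q\<^sup>2)" by (simp add: algebra_simps power2_eq_square)
  then show ?thesis using assms by (simp add: divide_le_eq mult.commute)
qed

lemma ennreal_exp_eq_suminf:
  fixes z :: real assumes "0 \<le> z"
  shows "ennreal (exp z) = (\<Sum>k. ennreal (z ^ k / fact k))"
proof -
  have sums: "(\<lambda>n. z ^ n / fact n) sums exp z"
    using exp_converges[of z] by (simp add: divide_inverse mult.commute)
  then have "(\<Sum>k. ennreal (z ^ k / fact k)) = ennreal (\<Sum>k. z ^ k / fact k)"
    using assms by (intro suminf_ennreal2) (auto simp: sums_iff)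
  then show ?thesis using sums by (simp add: sums_iff)
qed

lemma exp_minus_add_le:
  fixes x :: real assumes "0 \<le> x"
  shows "exp (- x) + x \<le> 1 + x\<^sup>2 / 2"
proof -
  define f where "f y = 1 + y\<^sup>2 / 2 - y - exp (- y)" for y :: real
  have deriv: "(f has_real_derivative (y - 1 + exp (- y))) (at y)" for y
    unfolding f_def by (auto intro!: derivative_eq_intros simp: power2_eq_square)
  have "f 0 \<le> f x"
  proof (rule DERIV_nonneg_imp_nondecreasing[OF assms])
    fix y show "\<exists>f'. (f has_real_derivative f') (at y) \<and> 0 \<le> f'"
      using exp_ge_add_one_self[of "- y"] deriv by (intro exI[of _ "y - 1 + exp (- y)"]) auto
  qed
  then show ?thesis unfolding f_def by simp
qed

lemma fact_double_le: "fact (2 * k) \<le> (fact k * (2 * real k) ^ k :: real)"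
proof -
  have "fact (2 * k) div fact (2 * k - k) \<le> (2 * k) ^ k" by (rule fact_div_fact_le_pow) simp
  moreover have "fact k dvd (fact (2 * k) :: nat)" by (rule fact_dvd) simp
  ultimately have "(fact (2 * k) :: nat) \<le> fact k * (2 * k) ^ k"
    by (metis diff_mult_distrib mult_2 mult_le_mono2 dvd_mult_div_cancel add_diff_cancel_left')
  then have "real (fact (2 * k)) \<le> real (fact k * (2 * k) ^ k)" by (simp only: of_nat_le_iff)
  then show ?thesis by simp
qed

lemma ln_inverse_ge_two_thirds:
  fixes \<epsilon> :: real assumes "0 < \<epsilon>" "\<epsilon> \<le> 1/2"
  shows "2/3 \<le> ln (1 / \<epsilon>)"
proof -
  have "ln 2 \<le> ln (1 / \<epsilon>)" using assms by (subst ln_le_cancel_iff) (auto simp: field_simps)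
  then show ?thesis using ln2_ge_two_thirds by linarith
qed

lemma mult_ln_inverse_le_1:
  fixes \<epsilon> :: real assumes "0 < \<epsilon>"
  shows "\<epsilon> * ln (1 / \<epsilon>) \<le> 1"
proof -
  have "\<epsilon> * ln (1 / \<epsilon>) \<le> \<epsilon> * (1 / \<epsilon> - 1)"
    using assms ln_le_minus_one[of "1 / \<epsilon>"] by (intro mult_left_mono) auto
  also have "\<dots> = 1 - \<epsilon>" using assms by (simp add: field_simps)
  finally show ?thesis using assms by linarith
qed

lemma mult_ln_inverse_squared_le:
  fixes \<epsilon> :: real assumes "0 < \<epsilon>" "\<epsilon> \<le> 1"
  shows "(\<epsilon> * ln (1 / \<epsilon>))\<^sup>2 \<le> 2 * \<epsilon>"
proof -
  define y where "y = ln (1 / \<epsilon>)"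
  have "0 \<le> y" "exp y = 1 / \<epsilon>" unfolding y_def using assms by auto
  then have "y\<^sup>2 \<le> 2 / \<epsilon>" using exp_lower_Taylor_quadratic[of y] by simp
  then have "\<epsilon> * y\<^sup>2 \<le> 2" using assms by (simp add: field_simps)
  then have "\<epsilon> * (\<epsilon> * y\<^sup>2) \<le> \<epsilon> * 2" using assms by (intro mult_left_mono) auto
  then show ?thesis unfolding y_def[symmetric] by (simp add: power2_eq_square mult_ac)
qed

lemma capped_weighted_sum_le:
  fixes w q :: "nat \<Rightarrow> real"
  assumes "\<And>i. i < n \<Longrightarrow> 0 \<le> w i" "\<And>i. i < n \<Longrightarrow> w i \<le> cap" "(\<Sum>i<n. w i) = 1"
  shows "(\<Sum>i<n. w i * q i) \<le> T + cap * (\<Sum>i<n. max 0 (q i - T))"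
proof -
  have "(\<Sum>i<n. w i * q i) \<le> (\<Sum>i<n. w i * T + cap * max 0 (q i - T))"
  proof (intro sum_mono)
    fix i assume "i \<in> {..<n}"
    then have "w i * q i \<le> w i * (T + max 0 (q i - T))" using assms(1) by (intro mult_left_mono) auto
    moreover have "w i * max 0 (q i - T) \<le> cap * max 0 (q i - T)"
      using assms(2) \<open>i \<in> {..<n}\<close> by (intro mult_right_mono) auto
    ultimately show "w i * q i \<le> w i * T + cap * max 0 (q i - T)" by (simp add: distrib_left)
  qed
  also have "\<dots> = T + cap * (\<Sum>i<n. max 0 (q i - T))"
    using assms(3) by (simp add: sum.distrib sum_distrib_left[symmetric] sum_distrib_right[symmetric])
  finally show ?thesis .
qed

section \<open>Moments of sub-Gaussian projections\<close>

locale subgauss_setting =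
  fixes c :: real and d :: nat and D :: "(nat \<Rightarrow> real) measure"
    and \<Sigma> \<Gamma> :: "nat \<Rightarrow> nat \<Rightarrow> real"
  assumes model: "subgauss_model c d D \<Sigma> \<Gamma>" and c_pos: "0 < c"
begin

sublocale prob_space D
  using model unfolding subgauss_model_def by blast

lemma measurable_dotp [measurable]: "dotp d a \<in> borel_measurable D"
proof -
  have "sets D = sets (\<Pi>\<^sub>M j\<in>{..<d}. lborel)"
    using model unfolding subgauss_model_def by blast
  then have "(\<lambda>x. x j) \<in> borel_measurable D" if "j < d" for j
    using that by (subst measurable_cong_sets[of _ "\<Pi>\<^sub>M j\<in>{..<d}. lborel"]) auto
  then show ?thesis unfolding dotp_def[abs_def] by measurable
qed

lemma integral_dotp_mult_dotp:
  "integrable D (\<lambda>x. dotp d a x * dotp d b x)" "(\<integral>x. dotp d a x * dotp d b x \<partial>D) = bilin d \<Sigma> a b"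
proof -
  have int: "integrable D (\<lambda>x. x j * x k)" and \<Sigma>: "\<Sigma> j k = (\<integral>x. x j * x k \<partial>D)" if "j < d" "k < d" for j k
    using model that unfolding subgauss_model_def by blast+
  have expand: "dotp d a x * dotp d b x = (\<Sum>j<d. \<Sum>k<d. a j * b k * (x j * x k))" for x
    unfolding dotp_def sum_product by (intro sum.cong refl) (simp add: algebra_simps)
  show "integrable D (\<lambda>x. dotp d a x * dotp d b x)"
    unfolding expand by (intro Bochner_Integration.integrable_sum integrable_mult_right int) auto
  have "(\<integral>x. dotp d a x * dotp d b x \<partial>D) = (\<Sum>j<d. \<Sum>k<d. a j * b k * (\<integral>x. x j * x k \<partial>D))"
    unfolding expand
    by (subst Bochner_Integration.integral_sum, use int in force)
      (intro sum.cong refl, subst Bochner_Integration.integral_sum, use int in auto)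
  also have "\<dots> = bilin d \<Sigma> a b" unfolding bilin_def by (intro sum.cong refl) (simp add: \<Sigma>)
  finally show "(\<integral>x. dotp d a x * dotp d b x \<partial>D) = bilin d \<Sigma> a b" .
qed

lemma \<Sigma>_psd: "0 \<le> quad_form d \<Sigma> v"
  using integral_dotp_mult_dotp[of v v] integral_nonneg_AE[of "\<lambda>x. dotp d v x * dotp d v x" D]
  by (simp add: quad_form_eq_bilin)

lemma \<Sigma>_symmetric: "symmetric_mat d \<Sigma>"
  using model unfolding subgauss_model_def symmetric_mat_def by (simp add: mult.commute)

lemma nn_integral_dotp_squared: "(\<integral>\<^sup>+x. ennreal ((dotp d a x)\<^sup>2) \<partial>D) = ennreal (quad_form d \<Sigma> a)"
  using integral_dotp_mult_dotp[of a a]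
  by (subst nn_integral_eq_integral) (auto simp: power2_eq_square quad_form_eq_bilin)

lemma mgf_dotp_le:
  "(\<integral>\<^sup>+x. ennreal (exp (t * dotp d a x)) \<partial>D) \<le> ennreal (exp (t\<^sup>2 * c * quad_form d \<Sigma> a / 2))"
proof (cases "(\<Sum>j<d. (a j)\<^sup>2) = 0")
  case True
  then have "dotp d a x = 0" for x unfolding dotp_def by (simp add: sum_nonneg_eq_0_iff)
  then show ?thesis using \<Sigma>_psd[of a] c_pos by (simp add: emeasure_space_1)
next
  case False
  define \<rho> where "\<rho> = sqrt (\<Sum>j<d. (a j)\<^sup>2)"
  have "\<rho> > 0" using False unfolding \<rho>_def by (simp add: sum_nonneg order_le_neq_trans)
  define v where "v j = a j / \<rho>" for j
  have v_unit: "(\<Sum>j<d. (v j)\<^sup>2) = 1"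
    using False unfolding v_def \<rho>_def by (simp add: power_divide sum_divide_distrib[symmetric] sum_nonneg)
  have rescale: "(t * \<rho>) * (\<Sum>j<d. x j * v j) = t * dotp d a x" for x
    unfolding v_def dotp_def sum_distrib_left using \<open>\<rho> > 0\<close> by (intro sum.cong refl) (simp add: field_simps)
  have rescale_\<Gamma>: "(t * \<rho>)\<^sup>2 * quad_form d \<Gamma> v = t\<^sup>2 * quad_form d \<Gamma> a"
    unfolding quad_form_def v_def sum_distrib_left using \<open>\<rho> > 0\<close>
    by (intro sum.cong refl) (simp add: field_simps power2_eq_square)
  have "(\<integral>\<^sup>+x. ennreal (exp ((t * \<rho>) * (\<Sum>j<d. x j * v j))) \<partial>D)
      \<le> ennreal (exp ((t * \<rho>)\<^sup>2 * quad_form d \<Gamma> v / 2))"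
    using model v_unit unfolding subgauss_model_def by blast
  then have "(\<integral>\<^sup>+x. ennreal (exp (t * dotp d a x)) \<partial>D) \<le> ennreal (exp (t\<^sup>2 * quad_form d \<Gamma> a / 2))"
    unfolding rescale rescale_\<Gamma> .
  also have "\<dots> \<le> ennreal (exp (t\<^sup>2 * c * quad_form d \<Sigma> a / 2))"
  proof -
    have "loewner_le d \<Gamma> (\<lambda>j k. c * \<Sigma> j k)" using model unfolding subgauss_model_def by blast
    then have "quad_form d \<Gamma> a \<le> c * quad_form d \<Sigma> a"
      by (simp add: loewner_le_iff_quad_form quad_form_scale)
    then show ?thesis by (intro ennreal_leI) (simp add: mult_left_mono mult.assoc)
  qed
  finally show ?thesis .
qed

end

context subgauss_setting
begin

lemma moment_dotp_le:
  assumes pos: "quad_form d \<Sigma> a > 0"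
  shows "(\<integral>\<^sup>+x. ennreal ((dotp d a x) ^ (2 * k)) \<partial>D) \<le> ennreal (2 * fact k * (exp 1 * c * quad_form d \<Sigma> a) ^ k)"
proof (cases "k = 0")
  case True
  then show ?thesis by (simp add: emeasure_space_1)
next
  case False
  define s where "s = quad_form d \<Sigma> a"
  have "c * s > 0" using pos c_pos unfolding s_def by simp
  define t where "t = sqrt (2 * k / (c * s))"
  have "t > 0" unfolding t_def using \<open>c * s > 0\<close> False by simp
  have "c \<noteq> 0" "s \<noteq> 0" using \<open>c * s > 0\<close> by auto
  have t_sq: "t\<^sup>2 * c * s / 2 = k"
    unfolding t_def using \<open>c * s > 0\<close> \<open>c \<noteq> 0\<close> \<open>s \<noteq> 0\<close> by (simp add: field_simps)
  define F where "F = fact (2 * k) / t ^ (2 * k)"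
  have "F \<ge> 0" unfolding F_def using \<open>t > 0\<close> by simp
  have "(\<integral>\<^sup>+x. ennreal ((dotp d a x) ^ (2 * k)) \<partial>D) \<le>
        (\<integral>\<^sup>+x. ennreal F * (ennreal (exp (t * dotp d a x)) + ennreal (exp ((- t) * dotp d a x))) \<partial>D)"
    using even_power_le_exp_add[OF \<open>t > 0\<close>, of _ k, folded F_def] \<open>F \<ge> 0\<close>
    by (intro nn_integral_mono) (simp add: ennreal_mult[symmetric] ennreal_plus[symmetric] del: ennreal_plus)
  also have "\<dots> = ennreal F * ((\<integral>\<^sup>+x. ennreal (exp (t * dotp d a x)) \<partial>D) + (\<integral>\<^sup>+x. ennreal (exp ((- t) * dotp d a x)) \<partial>D))"
    by (subst nn_integral_cmult) (auto simp: nn_integral_add)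
  also have "\<dots> \<le> ennreal F * (ennreal (exp (t\<^sup>2 * c * s / 2)) + ennreal (exp ((- t)\<^sup>2 * c * s / 2)))"
    unfolding s_def by (intro mult_left_mono add_mono mgf_dotp_le) auto
  also have "\<dots> = ennreal (F * (2 * exp k))"
    using t_sq \<open>F \<ge> 0\<close> by (simp add: ennreal_mult[symmetric] ennreal_plus[symmetric] del: ennreal_plus)
  also have "\<dots> \<le> ennreal (2 * fact k * (exp 1 * c * s) ^ k)"
  proof (intro ennreal_leI)
    have "F = fact (2 * k) * (c * s) ^ k / (2 * k) ^ k"
      unfolding F_def t_def using \<open>c * s > 0\<close> by (simp add: power_mult power_divide)
    also have "\<dots> \<le> fact k * (2 * real k) ^ k * (c * s) ^ k / (2 * k) ^ k"
      using fact_double_le[of k] \<open>c * s > 0\<close> by (intro divide_right_mono mult_right_mono) auto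
    also have "\<dots> = fact k * (c * s) ^ k" using False by simp
    finally have "F * (2 * exp k) \<le> fact k * (c * s) ^ k * (2 * exp k)" by (intro mult_right_mono) auto
    also have "\<dots> = 2 * fact k * (exp 1 * c * s) ^ k"
      by (simp add: exp_of_nat_mult[symmetric] power_mult_distrib mult_ac)
    finally show "F * (2 * exp k) \<le> 2 * fact k * (exp 1 * c * s) ^ k" .
  qed
  finally show ?thesis unfolding s_def .
qed

lemma c_lower_bound:
  assumes "quad_form d \<Sigma> a > 0"
  shows "1 \<le> 2 * exp 1 * c"
proof -
  have "ennreal (quad_form d \<Sigma> a) \<le> ennreal (2 * exp 1 * c * quad_form d \<Sigma> a)"
    using moment_dotp_le[OF assms, of 1] nn_integral_dotp_squared[of a] by (simp add: mult_ac)
  then have "quad_form d \<Sigma> a \<le> 2 * exp 1 * c * quad_form d \<Sigma> a"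
    using assms c_pos by (subst (asm) ennreal_le_iff) auto
  then show ?thesis using assms by simp
qed

lemma nn_integral_exp_series_term_le:
  assumes pos: "quad_form d \<Sigma> a > 0" and "0 \<le> \<theta>"
  shows "(\<integral>\<^sup>+x. ennreal ((\<theta> * (dotp d a x)\<^sup>2) ^ k / fact k) \<partial>D) \<le>
    ennreal (if k = 0 then 1 else if k = 1 then \<theta> * quad_form d \<Sigma> a else 2 * (\<theta> * exp 1 * c * quad_form d \<Sigma> a) ^ k)"
proof -
  define s where "s = quad_form d \<Sigma> a"
  have split: "(\<integral>\<^sup>+x. ennreal ((\<theta> * (dotp d a x)\<^sup>2) ^ k / fact k) \<partial>D) =
      ennreal (\<theta> ^ k / fact k) * (\<integral>\<^sup>+x. ennreal ((dotp d a x) ^ (2 * k)) \<partial>D)"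
    using \<open>0 \<le> \<theta>\<close> by (subst nn_integral_cmult[symmetric])
      (auto intro!: nn_integral_cong simp: ennreal_mult[symmetric] power_mult_distrib power_mult)
  consider "k = 0" | "k = 1" | "k \<ge> 2" by linarith
  then show ?thesis
  proof cases
    case 2
    have "(\<integral>\<^sup>+x. ennreal ((\<theta> * (dotp d a x)\<^sup>2) ^ k / fact k) \<partial>D) =
        ennreal \<theta> * (\<integral>\<^sup>+x. ennreal ((dotp d a x)\<^sup>2) \<partial>D)"
      using 2 \<open>0 \<le> \<theta>\<close> by (subst nn_integral_cmult[symmetric]) (auto intro!: nn_integral_cong simp: ennreal_mult')
    also have "\<dots> = ennreal (\<theta> * s)"
      using \<open>0 \<le> \<theta>\<close> by (simp add: nn_integral_dotp_squared s_def ennreal_mult')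
    finally show ?thesis using 2 by (simp add: s_def)
  next
    case 3
    have "ennreal (\<theta> ^ k / fact k) * (\<integral>\<^sup>+x. ennreal ((dotp d a x) ^ (2 * k)) \<partial>D) \<le>
          ennreal (\<theta> ^ k / fact k) * ennreal (2 * fact k * (exp 1 * c * s) ^ k)"
      unfolding s_def by (intro mult_left_mono moment_dotp_le pos) auto
    also have "\<dots> = ennreal (2 * (\<theta> * exp 1 * c * s) ^ k)"
      using \<open>0 \<le> \<theta>\<close> by (simp add: ennreal_mult'[symmetric] power_mult_distrib mult_ac)
    finally show ?thesis using 3 by (simp add: split s_def)
  qed (simp add: emeasure_space_1)
qed

lemma mgf_dotp_squared_le:
  assumes pos: "quad_form d \<Sigma> a > 0" and "0 \<le> \<theta>" and small: "\<theta> * exp 1 * c * quad_form d \<Sigma> a \<le> 1/2"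
  shows "(\<integral>\<^sup>+x. ennreal (exp (\<theta> * (dotp d a x)\<^sup>2)) \<partial>D) \<le>
         ennreal (1 + \<theta> * quad_form d \<Sigma> a + 4 * (\<theta> * exp 1 * c * quad_form d \<Sigma> a)\<^sup>2)"
proof -
  define s where "s = quad_form d \<Sigma> a"
  define q where "q = \<theta> * exp 1 * c * s"
  have "0 \<le> q" "q \<le> 1/2" unfolding q_def s_def using \<open>0 \<le> \<theta>\<close> c_pos pos small by auto
  define g where "g k = (if k = 0 then 1 else if k = 1 then \<theta> * s else 2 * q ^ k)" for k :: nat
  have g_sums: "g sums (2 / (1 - q) - 1 + (\<theta> * s - 2 * q))"
  proof -
    have "(\<lambda>k. 2 * q ^ k + (if k = 0 then - 1 else 0) + (if k = 1 then \<theta> * s - 2 * q else 0))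
        sums (2 * (1 / (1 - q)) + (- 1) + (\<theta> * s - 2 * q))"
      using \<open>0 \<le> q\<close> \<open>q \<le> 1/2\<close>
      by (intro sums_add sums_mult geometric_sums sums_single) auto
    moreover have "(\<lambda>k. 2 * q ^ k + (if k = 0 then - 1 else 0) + (if k = 1 then \<theta> * s - 2 * q else 0)) = g"
      unfolding g_def by (auto simp: fun_eq_iff)
    ultimately show ?thesis by simp
  qed
  have "(\<integral>\<^sup>+x. ennreal (exp (\<theta> * (dotp d a x)\<^sup>2)) \<partial>D) =
        (\<Sum>k. (\<integral>\<^sup>+x. ennreal ((\<theta> * (dotp d a x)\<^sup>2) ^ k / fact k) \<partial>D))"
    using \<open>0 \<le> \<theta>\<close> by (simp add: ennreal_exp_eq_suminf nn_integral_suminf)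
  also have "\<dots> \<le> (\<Sum>k. ennreal (g k))"
    using nn_integral_exp_series_term_le[OF pos \<open>0 \<le> \<theta>\<close>]
    unfolding g_def q_def s_def by (intro suminf_le) auto
  also have "\<dots> = ennreal (\<Sum>k. g k)"
  proof (intro suminf_ennreal2)
    show "0 \<le> g k" for k using \<open>0 \<le> q\<close> \<open>0 \<le> \<theta>\<close> \<Sigma>_psd[of a] unfolding g_def s_def by auto
  qed (use g_sums in \<open>simp add: sums_iff\<close>)
  also have "\<dots> \<le> ennreal (1 + \<theta> * s + 4 * q\<^sup>2)"
    using g_sums two_div_one_minus_le[OF \<open>0 \<le> q\<close> \<open>q \<le> 1/2\<close>] by (intro ennreal_leI) (simp add: sums_iff)
  finally show ?thesis unfolding q_def s_def .
qed

lemma mgf_dotp_squared_le_3: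
  assumes pos: "quad_form d \<Sigma> a > 0" and "0 \<le> \<theta>" and small: "\<theta> * exp 1 * c * quad_form d \<Sigma> a \<le> 1/2"
  shows "(\<integral>\<^sup>+x. ennreal (exp (\<theta> * (dotp d a x)\<^sup>2)) \<partial>D) \<le> 3"
proof -
  define s where "s = quad_form d \<Sigma> a"
  define q where "q = \<theta> * exp 1 * c * s"
  have "0 \<le> q" "q \<le> 1/2" unfolding q_def s_def using \<open>0 \<le> \<theta>\<close> c_pos pos small by auto
  have "\<theta> * s * 1 \<le> \<theta> * s * (2 * exp 1 * c)"
    using c_lower_bound[OF pos] \<open>0 \<le> \<theta>\<close> pos unfolding s_def by (intro mult_left_mono) auto
  then have "\<theta> * s \<le> 2 * q" unfolding q_def by (simp add: mult_ac)
  moreover have "4 * q\<^sup>2 \<le> 1"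
    using mult_mono[of "2 * q" 1 "2 * q" 1] \<open>0 \<le> q\<close> \<open>q \<le> 1/2\<close> by (simp add: power2_eq_square)
  ultimately have "ennreal (1 + \<theta> * s + 4 * q\<^sup>2) \<le> ennreal 3"
    using \<open>q \<le> 1/2\<close> by (intro ennreal_leI) linarith
  then show ?thesis using mgf_dotp_squared_le[OF pos \<open>0 \<le> \<theta>\<close> small] unfolding q_def s_def by simp
qed

lemma mgf_neg_dotp_squared_le:
  assumes pos: "quad_form d \<Sigma> a > 0" and "0 \<le> \<theta>"
  shows "(\<integral>\<^sup>+x. ennreal (exp (\<theta> * - (dotp d a x)\<^sup>2)) \<partial>D) \<le>
      ennreal (1 - \<theta> * quad_form d \<Sigma> a + 2 * \<theta>\<^sup>2 * (exp 1 * c * quad_form d \<Sigma> a)\<^sup>2)"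
proof -
  define s where "s = quad_form d \<Sigma> a"
  let ?M = "\<integral>\<^sup>+x. ennreal (exp (\<theta> * - (dotp d a x)\<^sup>2)) \<partial>D"
  have "?M + ennreal (\<theta> * s) = (\<integral>\<^sup>+x. ennreal (exp (\<theta> * - (dotp d a x)\<^sup>2)) + ennreal \<theta> * ennreal ((dotp d a x)\<^sup>2) \<partial>D)"
    using \<open>0 \<le> \<theta>\<close> by (simp add: nn_integral_add nn_integral_cmult nn_integral_dotp_squared s_def ennreal_mult')
  also have "\<dots> \<le> (\<integral>\<^sup>+x. 1 + ennreal (\<theta>\<^sup>2 / 2) * ennreal ((dotp d a x) ^ (2 * 2)) \<partial>D)"
  proof (intro nn_integral_mono)
    fix x
    have "exp (\<theta> * - (dotp d a x)\<^sup>2) + \<theta> * (dotp d a x)\<^sup>2 \<le> 1 + \<theta>\<^sup>2 / 2 * (dotp d a x) ^ (2 * 2)"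
      using exp_minus_add_le[of "\<theta> * (dotp d a x)\<^sup>2"] \<open>0 \<le> \<theta>\<close>
      by (simp add: power_mult_distrib power_mult[symmetric])
    moreover have "ennreal (exp (\<theta> * - (dotp d a x)\<^sup>2)) + ennreal \<theta> * ennreal ((dotp d a x)\<^sup>2) =
        ennreal (exp (\<theta> * - (dotp d a x)\<^sup>2) + \<theta> * (dotp d a x)\<^sup>2)"
      using \<open>0 \<le> \<theta>\<close> by (simp add: ennreal_mult')
    moreover have "1 + ennreal (\<theta>\<^sup>2 / 2) * ennreal ((dotp d a x) ^ (2 * 2)) =
        ennreal (1 + \<theta>\<^sup>2 / 2 * (dotp d a x) ^ (2 * 2))"
      using ennreal_mult'[of "\<theta>\<^sup>2 / 2" "(dotp d a x) ^ (2 * 2)"] by simp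
    ultimately show "ennreal (exp (\<theta> * - (dotp d a x)\<^sup>2)) + ennreal \<theta> * ennreal ((dotp d a x)\<^sup>2) \<le>
        1 + ennreal (\<theta>\<^sup>2 / 2) * ennreal ((dotp d a x) ^ (2 * 2))"
      by (simp only: ennreal_leI)
  qed
  also have "\<dots> = 1 + ennreal (\<theta>\<^sup>2 / 2) * (\<integral>\<^sup>+x. ennreal ((dotp d a x) ^ (2 * 2)) \<partial>D)"
    by (simp add: nn_integral_add nn_integral_cmult emeasure_space_1)
  also have "\<dots> \<le> 1 + ennreal (\<theta>\<^sup>2 / 2) * ennreal (2 * fact 2 * (exp 1 * c * s)\<^sup>2)"
    unfolding s_def by (intro add_mono mult_left_mono moment_dotp_le pos) auto
  also have "\<dots> = ennreal (1 + 2 * \<theta>\<^sup>2 * (exp 1 * c * s)\<^sup>2)"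
  proof -
    have "ennreal (\<theta>\<^sup>2 / 2) * ennreal (2 * fact 2 * (exp 1 * c * s)\<^sup>2) = ennreal (2 * \<theta>\<^sup>2 * (exp 1 * c * s)\<^sup>2)"
      by (simp add: ennreal_mult'[symmetric] fact_numeral)
    moreover have "0 \<le> 2 * \<theta>\<^sup>2 * (exp 1 * c * s)\<^sup>2" by simp
    ultimately show ?thesis by (simp only: ennreal_plus[OF zero_le_one] ennreal_1)
  qed
  finally have sum_le: "?M + ennreal (\<theta> * s) \<le> ennreal (1 + 2 * \<theta>\<^sup>2 * (exp 1 * c * s)\<^sup>2)" .
  have "?M \<le> (\<integral>\<^sup>+x. 1 \<partial>D)" using \<open>0 \<le> \<theta>\<close> by (intro nn_integral_mono) simp
  then have "?M \<noteq> \<top>" by (auto simp: emeasure_space_1 top_unique)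
  then obtain m where m: "?M = ennreal m" "0 \<le> m" by (cases ?M rule: ennreal_cases) auto
  have "0 \<le> \<theta> * s" using \<open>0 \<le> \<theta>\<close> \<Sigma>_psd[of a] unfolding s_def by simp
  then have "ennreal (m + \<theta> * s) \<le> ennreal (1 + 2 * \<theta>\<^sup>2 * (exp 1 * c * s)\<^sup>2)"
    using sum_le m by (simp only: ennreal_plus)
  then have "m + \<theta> * s \<le> 1 + 2 * \<theta>\<^sup>2 * (exp 1 * c * s)\<^sup>2"
    by (subst (asm) ennreal_le_iff) auto
  then show ?thesis using m unfolding s_def by (simp add: ennreal_leI)
qed

end

section \<open>Tail bounds in one direction\<close>

lemma chernoff_PiM_sum:
  fixes D :: "'a measure" and g :: "'a \<Rightarrow> real"
  assumes "prob_space D" and [measurable]: "g \<in> borel_measurable D" and "0 < \<theta>"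
    and mgf: "(\<integral>\<^sup>+x. ennreal (exp (\<theta> * g x)) \<partial>D) \<le> ennreal B" and "0 \<le> B"
  shows "emeasure (PiM {..<n} (\<lambda>_. D)) {X \<in> space (PiM {..<n} (\<lambda>_. D)). a \<le> (\<Sum>i<n. g (X i))}
           \<le> ennreal (exp (- \<theta> * a) * B ^ n)"
proof -
  interpret product_prob_space "\<lambda>_. D" by (rule product_prob_spaceI) (rule assms)
  let ?P = "PiM {..<n} (\<lambda>_. D)"
  have "emeasure ?P {X \<in> space ?P. a \<le> (\<Sum>i<n. g (X i))} \<le>
     ennreal (exp (- \<theta> * a)) * (\<integral>\<^sup>+X. ennreal (exp (\<theta> * (\<Sum>i<n. g (X i)))) * indicator (space ?P) X \<partial>?P)"
    using \<open>0 < \<theta>\<close> by (intro Chernoff_ineq_nn_integral_ge) auto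
  also have "(\<integral>\<^sup>+X. ennreal (exp (\<theta> * (\<Sum>i<n. g (X i)))) * indicator (space ?P) X \<partial>?P) =
             (\<integral>\<^sup>+X. (\<Prod>i\<in>{..<n}. ennreal (exp (\<theta> * g (X i)))) \<partial>?P)"
    by (intro nn_integral_cong) (simp add: sum_distrib_left exp_sum prod_ennreal)
  also have "\<dots> = (\<integral>\<^sup>+x. ennreal (exp (\<theta> * g x)) \<partial>D) ^ n"
    using product_nn_integral_prod[of "{..<n}" "\<lambda>i x. ennreal (exp (\<theta> * g x))"] by simp
  also have "\<dots> \<le> ennreal B ^ n" by (intro power_mono mgf) simp
  finally show ?thesis
    using \<open>0 \<le> B\<close> by (simp add: ennreal_mult'[symmetric] ennreal_power mult_left_mono)
qed

context subgauss_setting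
begin

abbreviation samples :: "nat \<Rightarrow> (nat \<Rightarrow> nat \<Rightarrow> real) measure" where
  "samples n \<equiv> PiM {..<n} (\<lambda>_. D)"

lemma emeasure_sum_squares_upper_tail:
  assumes pos: "quad_form d \<Sigma> a > 0" and "0 < \<alpha>" "\<alpha> \<le> 4 * exp 1 * c"
  shows "emeasure (samples n) {X \<in> space (samples n). real n * (1 + \<alpha>) * quad_form d \<Sigma> a \<le> (\<Sum>i<n. (dotp d a (X i))\<^sup>2)}
          \<le> ennreal (exp (- real n * \<alpha>\<^sup>2 / (16 * (exp 1)\<^sup>2 * c\<^sup>2)))"
proof -
  define s where "s = quad_form d \<Sigma> a"
  define E where "E = exp (1::real)"
  have "E > 0" "s > 0" unfolding E_def s_def using pos by auto
  define \<theta> where "\<theta> = \<alpha> / (8 * E\<^sup>2 * c\<^sup>2 * s)"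
  have "\<theta> > 0" unfolding \<theta>_def using \<open>0 < \<alpha>\<close> c_pos \<open>s > 0\<close> \<open>E > 0\<close> by simp
  have "\<theta> * E * c * s = \<alpha> / (8 * E * c)"
    unfolding \<theta>_def using c_pos \<open>s > 0\<close> \<open>E > 0\<close> by (simp add: field_simps power2_eq_square)
  also have "\<dots> \<le> 1/2" using \<open>\<alpha> \<le> 4 * exp 1 * c\<close> c_pos \<open>E > 0\<close> by (simp add: pos_divide_le_eq E_def mult_ac)
  finally have small: "\<theta> * exp 1 * c * quad_form d \<Sigma> a \<le> 1/2" unfolding E_def s_def .
  define B where "B = 1 + \<theta> * s + 4 * (\<theta> * E * c * s)\<^sup>2"
  have "B \<ge> 0" unfolding B_def using \<open>\<theta> > 0\<close> \<open>s > 0\<close> by simp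
  have "emeasure (samples n) {X \<in> space (samples n). real n * (1 + \<alpha>) * s \<le> (\<Sum>i<n. (dotp d a (X i))\<^sup>2)}
         \<le> ennreal (exp (- \<theta> * (real n * (1 + \<alpha>) * s)) * B ^ n)"
    using mgf_dotp_squared_le[OF pos less_imp_le[OF \<open>\<theta> > 0\<close>] small] \<open>B \<ge> 0\<close> \<open>\<theta> > 0\<close>
    by (intro chernoff_PiM_sum) (simp_all add: B_def E_def s_def prob_space_axioms)
  also have "exp (- \<theta> * (real n * (1 + \<alpha>) * s)) * B ^ n \<le>
      exp (- \<theta> * (real n * (1 + \<alpha>) * s)) * exp (\<theta> * s + 4 * (\<theta> * E * c * s)\<^sup>2) ^ n"
  proof -
    have "B \<le> exp (\<theta> * s + 4 * (\<theta> * E * c * s)\<^sup>2)"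
      using exp_ge_add_one_self[of "\<theta> * s + 4 * (\<theta> * E * c * s)\<^sup>2"] unfolding B_def by linarith
    then show ?thesis using \<open>B \<ge> 0\<close> by (intro mult_left_mono power_mono) auto
  qed
  also have "\<dots> = exp (real n * (- \<theta> * \<alpha> * s + 4 * (\<theta> * E * c * s)\<^sup>2))"
    by (simp add: exp_of_nat_mult[symmetric] exp_add[symmetric] algebra_simps)
  also have "- \<theta> * \<alpha> * s + 4 * (\<theta> * E * c * s)\<^sup>2 = - \<alpha>\<^sup>2 / (16 * E\<^sup>2 * c\<^sup>2)"
    unfolding \<theta>_def using c_pos \<open>s > 0\<close> \<open>E > 0\<close> by (simp add: field_simps power2_eq_square)
  finally show ?thesis unfolding s_def E_def by (simp add: ennreal_leI)
qed

lemma emeasure_sum_squares_lower_tail: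
  assumes pos: "quad_form d \<Sigma> a > 0" and "0 < \<alpha>"
  shows "emeasure (samples n) {X \<in> space (samples n). (\<Sum>i<n. (dotp d a (X i))\<^sup>2) \<le> real n * (1 - \<alpha>) * quad_form d \<Sigma> a}
          \<le> ennreal (exp (- real n * \<alpha>\<^sup>2 / (8 * (exp 1)\<^sup>2 * c\<^sup>2)))"
proof -
  define s where "s = quad_form d \<Sigma> a"
  define E where "E = exp (1::real)"
  have "E > 0" "s > 0" unfolding E_def s_def using pos by auto
  define \<theta> where "\<theta> = \<alpha> / (4 * E\<^sup>2 * c\<^sup>2 * s)"
  have "\<theta> > 0" unfolding \<theta>_def using \<open>0 < \<alpha>\<close> c_pos \<open>s > 0\<close> \<open>E > 0\<close> by simp
  define B where "B = 1 - \<theta> * s + 2 * \<theta>\<^sup>2 * (E * c * s)\<^sup>2"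
  have "B \<ge> 0"
  proof -
    have "1 \<le> (2 * E * c)\<^sup>2" using c_lower_bound[OF pos] unfolding E_def by (simp add: one_le_power)
    then have "(\<theta> * s)\<^sup>2 * 1 \<le> (\<theta> * s)\<^sup>2 * (2 * E * c)\<^sup>2" by (intro mult_left_mono) auto
    then have "(\<theta> * s)\<^sup>2 \<le> 4 * (\<theta>\<^sup>2 * (E * c * s)\<^sup>2)" by (simp add: power_mult_distrib mult_ac)
    moreover have "\<theta> * s \<le> 1 + (\<theta> * s)\<^sup>2 / 4"
      using zero_le_power2[of "1 - \<theta> * s / 2"] by (simp add: power2_eq_square algebra_simps)
    moreover have "0 \<le> \<theta>\<^sup>2 * (E * c * s)\<^sup>2" by simp
    ultimately show ?thesis unfolding B_def by linarith
  qed
  have set_eq: "{X \<in> space (samples n). (\<Sum>i<n. (dotp d a (X i))\<^sup>2) \<le> real n * (1 - \<alpha>) * s} =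
      {X \<in> space (samples n). - (real n * (1 - \<alpha>) * s) \<le> (\<Sum>i<n. - (dotp d a (X i))\<^sup>2)}"
    by (auto simp: sum_negf)
  have "emeasure (samples n) {X \<in> space (samples n). - (real n * (1 - \<alpha>) * s) \<le> (\<Sum>i<n. - (dotp d a (X i))\<^sup>2)}
         \<le> ennreal (exp (- \<theta> * - (real n * (1 - \<alpha>) * s)) * B ^ n)"
    using mgf_neg_dotp_squared_le[OF pos less_imp_le[OF \<open>\<theta> > 0\<close>]] \<open>B \<ge> 0\<close> \<open>\<theta> > 0\<close>
    by (intro chernoff_PiM_sum) (simp_all add: B_def E_def s_def prob_space_axioms)
  also have "exp (- \<theta> * - (real n * (1 - \<alpha>) * s)) * B ^ n \<le>
      exp (- \<theta> * - (real n * (1 - \<alpha>) * s)) * exp (- \<theta> * s + 2 * \<theta>\<^sup>2 * (E * c * s)\<^sup>2) ^ n"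
  proof -
    have "B \<le> exp (- \<theta> * s + 2 * \<theta>\<^sup>2 * (E * c * s)\<^sup>2)"
      using exp_ge_add_one_self[of "- \<theta> * s + 2 * \<theta>\<^sup>2 * (E * c * s)\<^sup>2"] unfolding B_def by linarith
    then show ?thesis using \<open>B \<ge> 0\<close> by (intro mult_left_mono power_mono) auto
  qed
  also have "\<dots> = exp (real n * (- \<theta> * \<alpha> * s + 2 * (\<theta> * E * c * s)\<^sup>2))"
    by (simp add: exp_of_nat_mult[symmetric] exp_add[symmetric] algebra_simps power_mult_distrib)
  also have "- \<theta> * \<alpha> * s + 2 * (\<theta> * E * c * s)\<^sup>2 = - \<alpha>\<^sup>2 / (8 * E\<^sup>2 * c\<^sup>2)"
    unfolding \<theta>_def using c_pos \<open>s > 0\<close> \<open>E > 0\<close> by (simp add: field_simps power2_eq_square)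
  finally show ?thesis unfolding set_eq[unfolded s_def] s_def E_def by (simp add: ennreal_leI)
qed

lemma mgf_excess_le:
  assumes pos: "quad_form d \<Sigma> a > 0" and "0 \<le> \<theta>" and small: "\<theta> * exp 1 * c * quad_form d \<Sigma> a \<le> 1/2"
  shows "(\<integral>\<^sup>+x. ennreal (exp (\<theta> * max 0 ((dotp d a x)\<^sup>2 - T))) \<partial>D) \<le> ennreal (1 + 3 * exp (- (\<theta> * T)))"
proof -
  define \<epsilon> where "\<epsilon> = exp (- (\<theta> * T))"
  have "0 < \<epsilon>" unfolding \<epsilon>_def by simp
  have "(\<integral>\<^sup>+x. ennreal (exp (\<theta> * max 0 ((dotp d a x)\<^sup>2 - T))) \<partial>D) \<le>
        (\<integral>\<^sup>+x. 1 + ennreal \<epsilon> * ennreal (exp (\<theta> * (dotp d a x)\<^sup>2)) \<partial>D)"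
  proof (intro nn_integral_mono)
    fix x
    have "exp (\<theta> * max 0 ((dotp d a x)\<^sup>2 - T)) \<le> 1 + \<epsilon> * exp (\<theta> * (dotp d a x)\<^sup>2)"
      unfolding \<epsilon>_def by (cases "(dotp d a x)\<^sup>2 - T \<ge> 0") (auto simp: max_def exp_add[symmetric] algebra_simps)
    then have "ennreal (exp (\<theta> * max 0 ((dotp d a x)\<^sup>2 - T))) \<le> ennreal (1 + \<epsilon> * exp (\<theta> * (dotp d a x)\<^sup>2))"
      by (rule ennreal_leI)
    then show "ennreal (exp (\<theta> * max 0 ((dotp d a x)\<^sup>2 - T))) \<le> 1 + ennreal \<epsilon> * ennreal (exp (\<theta> * (dotp d a x)\<^sup>2))"
      using \<open>0 < \<epsilon>\<close> ennreal_mult'[of \<epsilon> "exp (\<theta> * (dotp d a x)\<^sup>2)"] by simp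
  qed
  also have "\<dots> = 1 + ennreal \<epsilon> * (\<integral>\<^sup>+x. ennreal (exp (\<theta> * (dotp d a x)\<^sup>2)) \<partial>D)"
    by (simp add: nn_integral_add nn_integral_cmult emeasure_space_1)
  also have "\<dots> \<le> 1 + ennreal \<epsilon> * 3"
    by (intro add_mono mult_left_mono mgf_dotp_squared_le_3[OF pos \<open>0 \<le> \<theta>\<close> small]) auto
  also have "\<dots> = ennreal (1 + 3 * \<epsilon>)"
    using \<open>0 < \<epsilon>\<close> by (simp add: ennreal_mult' mult.commute)
  finally show ?thesis unfolding \<epsilon>_def .
qed

lemma emeasure_sum_excess_tail:
  assumes pos: "quad_form d \<Sigma> a > 0" and "0 < \<epsilon>"
  shows "emeasure (samples n) {X \<in> space (samples n). real n * \<epsilon> * (12 * exp 1 * c * quad_form d \<Sigma> a) \<le>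
            (\<Sum>i<n. max 0 ((dotp d a (X i))\<^sup>2 - 2 * exp 1 * c * quad_form d \<Sigma> a * ln (1 / \<epsilon>)))}
          \<le> ennreal (exp (- 3 * real n * \<epsilon>))"
proof -
  define s where "s = quad_form d \<Sigma> a"
  define E where "E = exp (1::real)"
  have "E > 0" "s > 0" unfolding E_def s_def using pos by auto
  define \<theta> where "\<theta> = 1 / (2 * E * c * s)"
  have "\<theta> > 0" unfolding \<theta>_def using c_pos \<open>s > 0\<close> \<open>E > 0\<close> by simp
  have small: "\<theta> * exp 1 * c * quad_form d \<Sigma> a \<le> 1/2"
    unfolding \<theta>_def E_def s_def using pos c_pos by simp
  define T where "T = 2 * E * c * s * ln (1 / \<epsilon>)"
  have "\<theta> * T = ln (1 / \<epsilon>)" unfolding \<theta>_def T_def using c_pos \<open>s > 0\<close> \<open>E > 0\<close> by simp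
  then have mgf: "(\<integral>\<^sup>+x. ennreal (exp (\<theta> * max 0 ((dotp d a x)\<^sup>2 - T))) \<partial>D) \<le> ennreal (1 + 3 * \<epsilon>)"
    using mgf_excess_le[OF pos less_imp_le[OF \<open>\<theta> > 0\<close>] small, of T] \<open>0 < \<epsilon>\<close> by (simp add: exp_minus)
  have "emeasure (samples n) {X \<in> space (samples n). real n * \<epsilon> * (12 * E * c * s) \<le> (\<Sum>i<n. max 0 ((dotp d a (X i))\<^sup>2 - T))}
         \<le> ennreal (exp (- \<theta> * (real n * \<epsilon> * (12 * E * c * s))) * (1 + 3 * \<epsilon>) ^ n)"
    using mgf \<open>\<theta> > 0\<close> \<open>0 < \<epsilon>\<close> by (intro chernoff_PiM_sum) (simp_all add: prob_space_axioms)
  also have "\<dots> \<le> ennreal (exp (- \<theta> * (real n * \<epsilon> * (12 * E * c * s))) * exp (3 * \<epsilon>) ^ n)"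
    using \<open>0 < \<epsilon>\<close> exp_ge_add_one_self[of "3 * \<epsilon>"] by (intro ennreal_leI mult_left_mono power_mono) auto
  also have "exp (- \<theta> * (real n * \<epsilon> * (12 * E * c * s))) * exp (3 * \<epsilon>) ^ n = exp (- 3 * real n * \<epsilon>)"
    unfolding \<theta>_def using c_pos \<open>s > 0\<close> \<open>E > 0\<close>
    by (simp add: exp_of_nat_mult[symmetric] exp_add[symmetric] field_simps)
  finally show ?thesis unfolding s_def E_def T_def by (simp add: mult_ac)
qed

end

section \<open>Nets of the unit sphere\<close>

definition sqnorm :: "nat \<Rightarrow> (nat \<Rightarrow> real) \<Rightarrow> real" where
  "sqnorm r u = (\<Sum>l<r. (u l)\<^sup>2)"

lemma sqnorm_nonneg [simp]: "0 \<le> sqnorm r u"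
  unfolding sqnorm_def by (simp add: sum_nonneg)

lemma sqnorm_eq_0_coord: "sqnorm r x = 0 \<Longrightarrow> l < r \<Longrightarrow> x l = 0"
  unfolding sqnorm_def by (subst (asm) sum_nonneg_eq_0_iff) auto

lemma sqnorm_scale: "sqnorm r (\<lambda>l. t * a l) = t\<^sup>2 * sqnorm r a"
  unfolding sqnorm_def by (simp add: power_mult_distrib sum_distrib_left)

lemma sqnorm_diff_commute: "sqnorm r (\<lambda>l. y l - x l) = sqnorm r (\<lambda>l. x l - y l)"
  unfolding sqnorm_def by (simp add: power2_commute)

lemma sqnorm_parallelogram:
  "sqnorm r (\<lambda>l. a l + b l) + sqnorm r (\<lambda>l. a l - b l) = 2 * sqnorm r a + 2 * sqnorm r b"
  unfolding sqnorm_def by (simp add: sum.distrib[symmetric] sum_distrib_left power2_eq_square algebra_simps)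

lemma sqnorm_add_le: "sqnorm r (\<lambda>l. a l + b l) \<le> 2 * sqnorm r a + 2 * sqnorm r b"
  using sqnorm_parallelogram[of r a b] sqnorm_nonneg[of r "\<lambda>l. a l - b l"] by linarith

lemma abs_coord_le_1:
  assumes "sqnorm r x \<le> 1" "l < r" shows "\<bar>x l\<bar> \<le> 1"
proof -
  have "(x l)\<^sup>2 \<le> sqnorm r x" unfolding sqnorm_def using assms(2) by (intro member_le_sum) auto
  then show ?thesis using assms(1) abs_square_le_1 by fastforce
qed

lemma quad_form_identity: "quad_form r (\<lambda>l l'. if l = l' then 1 else 0) u = sqnorm r u"
proof -
  have "(\<Sum>k<r. u j * (if j = k then 1 else 0) * u k) = (\<Sum>k<r. if k = j then u j * u k else 0)" for j
    by (intro sum.cong) auto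
  then show ?thesis unfolding quad_form_def sqnorm_def by (simp add: sum.delta' power2_eq_square)
qed

lemma quad_form_le_sqnorm_if_unit:
  assumes unit: "\<And>x. sqnorm r x = 1 \<Longrightarrow> \<bar>quad_form r M x\<bar> \<le> A"
  shows "\<bar>quad_form r M x\<bar> \<le> A * sqnorm r x"
proof (cases "sqnorm r x = 0")
  case True
  then show ?thesis by (simp add: quad_form_def sqnorm_eq_0_coord)
next
  case False
  then have "sqnorm r x > 0" using sqnorm_nonneg[of r x] by linarith
  define \<rho> where "\<rho> = 1 / sqrt (sqnorm r x)"
  have "\<rho>\<^sup>2 * sqnorm r x = 1" unfolding \<rho>_def using \<open>sqnorm r x > 0\<close> by (simp add: power_divide)
  then have "\<bar>quad_form r M (\<lambda>l. \<rho> * x l)\<bar> \<le> A" by (intro unit) (simp add: sqnorm_scale)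
  moreover have "quad_form r M (\<lambda>l. \<rho> * x l) = \<rho>\<^sup>2 * quad_form r M x"
    unfolding quad_form_def sum_distrib_left by (intro sum.cong refl) (simp add: power2_eq_square mult_ac)
  ultimately have "\<rho>\<^sup>2 * \<bar>quad_form r M x\<bar> \<le> \<rho>\<^sup>2 * (A * sqnorm r x)"
    using \<open>\<rho>\<^sup>2 * sqnorm r x = 1\<close> by (simp add: abs_mult mult_ac)
  then show ?thesis using \<open>\<rho>\<^sup>2 * sqnorm r x = 1\<close> by (cases "\<rho> = 0") auto
qed

lemma bilin_polarization_bound:
  assumes symmetric: "symmetric_mat r M" and bound: "\<And>x. \<bar>quad_form r M x\<bar> \<le> A * sqnorm r x"
  shows "\<bar>bilin r M a b\<bar> \<le> A / 2 * (sqnorm r a + sqnorm r b)"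
proof -
  define P where "P = quad_form r M (\<lambda>l. a l + b l)"
  define Q where "Q = quad_form r M (\<lambda>l. a l - b l)"
  have "4 * bilin r M a b = P - Q"
    unfolding P_def Q_def using bilin_commute[OF symmetric, of a b]
    by (simp add: quad_form_eq_bilin bilin_left_linear bilin_right_linear)
  then have "4 * \<bar>bilin r M a b\<bar> \<le> \<bar>P\<bar> + \<bar>Q\<bar>"
    using abs_triangle_ineq4[of P Q] by (simp add: abs_mult)
  also have "\<dots> \<le> A * sqnorm r (\<lambda>l. a l + b l) + A * sqnorm r (\<lambda>l. a l - b l)"
    unfolding P_def Q_def by (intro add_mono bound)
  also have "\<dots> = 4 * (A / 2 * (sqnorm r a + sqnorm r b))"
    unfolding distrib_left[symmetric] sqnorm_parallelogram by simp
  finally show ?thesis by simp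
qed

lemma quad_form_bounded_on_ball: "\<exists>B. \<forall>x. sqnorm r x \<le> 1 \<longrightarrow> \<bar>quad_form r M x\<bar> \<le> B"
proof (intro exI allI impI)
  fix x assume "sqnorm r x \<le> 1"
  have "\<bar>quad_form r M x\<bar> \<le> (\<Sum>l<r. \<Sum>l'<r. \<bar>x l * M l l' * x l'\<bar>)"
    unfolding quad_form_def by (rule order_trans[OF sum_abs]) (intro sum_mono sum_abs)
  also have "\<dots> \<le> (\<Sum>l<r. \<Sum>l'<r. \<bar>M l l'\<bar>)"
  proof (intro sum_mono)
    fix l l' assume "l \<in> {..<r}" "l' \<in> {..<r}"
    then have "\<bar>x l\<bar> * \<bar>x l'\<bar> \<le> 1" using abs_coord_le_1[OF \<open>sqnorm r x \<le> 1\<close>] by (intro mult_le_one) auto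
    then show "\<bar>x l * M l l' * x l'\<bar> \<le> \<bar>M l l'\<bar>"
      using mult_right_mono[of "\<bar>x l\<bar> * \<bar>x l'\<bar>" 1 "\<bar>M l l'\<bar>"] by (simp add: abs_mult mult_ac)
  qed
  finally show "\<bar>quad_form r M x\<bar> \<le> (\<Sum>l<r. \<Sum>l'<r. \<bar>M l l'\<bar>)" .
qed

lemma quad_form_perturb_le:
  assumes symmetric: "symmetric_mat r M" and homog: "\<And>z. \<bar>quad_form r M z\<bar> \<le> A * sqnorm r z" and "0 \<le> A"
    and "sqnorm r x = 1" "sqnorm r (\<lambda>l. x l - y l) \<le> 1/256" "sqnorm r y \<le> 4"
  shows "\<bar>quad_form r M x\<bar> \<le> \<bar>quad_form r M y\<bar> + 11/32 * A"
proof -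
  define a where "a = (\<lambda>l. 4 * (x l - y l))"
  define b where "b = (\<lambda>l. (1/4) * (x l + y l))"
  have "quad_form r M x - quad_form r M y = bilin r M (\<lambda>l. x l - y l) (\<lambda>l. x l + y l)"
    using bilin_commute[OF symmetric, of x y]
    by (simp add: quad_form_eq_bilin bilin_left_linear bilin_right_linear)
  also have "\<dots> = bilin r M a b"
    unfolding a_def b_def by (simp only: bilin_left_linear(3) bilin_right_linear(3))
  finally have triangle: "\<bar>quad_form r M x\<bar> \<le> \<bar>quad_form r M y\<bar> + \<bar>bilin r M a b\<bar>" by linarith
  have polar: "\<bar>bilin r M a b\<bar> \<le> A / 2 * (sqnorm r a + sqnorm r b)"
    by (rule bilin_polarization_bound[OF symmetric homog])
  have "sqnorm r a \<le> 16/256"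
    using assms(5) unfolding a_def sqnorm_scale by simp
  moreover have "sqnorm r b \<le> 10/16"
    using sqnorm_add_le[of r x y] assms(4,6) unfolding b_def sqnorm_scale by (simp add: power2_eq_square)
  ultimately have "A / 2 * (sqnorm r a + sqnorm r b) \<le> A / 2 * (11/16)"
    using \<open>0 \<le> A\<close> by (intro mult_left_mono) auto
  with triangle polar show ?thesis by linarith
qed

text \<open>The standard net argument: with \<open>A\<close> the maximum of \<open>|u\<^sup>T M u|\<close> on the unit ball, writing a unit
  vector as \<open>x = y + (x - y)\<close> with \<open>y\<close> in the net gives \<open>A \<le> 4 \<alpha> + 11/32 A\<close>.\<close>

lemma quad_form_bound_from_net:
  assumes symmetric: "symmetric_mat r M"
    and cover: "\<And>x. sqnorm r x = 1 \<Longrightarrow> \<exists>y\<in>N. sqnorm r (\<lambda>l. x l - y l) \<le> 1/256 \<and> sqnorm r y \<le> 4"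
    and on_net: "\<And>y. y \<in> N \<Longrightarrow> \<bar>quad_form r M y\<bar> \<le> \<alpha> * sqnorm r y" and "0 \<le> \<alpha>"
  shows "\<bar>quad_form r M u\<bar> \<le> 7 * \<alpha> * sqnorm r u"
proof -
  define S where "S = {\<bar>quad_form r M x\<bar> | x. sqnorm r x \<le> 1}"
  define A where "A = Sup S"
  have "0 \<in> S" unfolding S_def by (auto intro!: exI[of _ "\<lambda>_. 0"] simp: quad_form_def sqnorm_def)
  have "bdd_above S" using quad_form_bounded_on_ball[of r M] unfolding S_def bdd_above_def by blast
  have ball: "\<bar>quad_form r M x\<bar> \<le> A" if "sqnorm r x \<le> 1" for x
    unfolding A_def using that \<open>bdd_above S\<close> by (intro cSup_upper) (auto simp: S_def)
  have "0 \<le> A" using ball[of "\<lambda>_. 0"] by (simp add: sqnorm_def)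
  have homog: "\<bar>quad_form r M x\<bar> \<le> A * sqnorm r x" for x
    using ball by (intro quad_form_le_sqnorm_if_unit) simp
  have unit: "\<bar>quad_form r M x\<bar> \<le> 4 * \<alpha> + 11/32 * A" if x_unit: "sqnorm r x = 1" for x
  proof -
    obtain y where y: "y \<in> N" "sqnorm r (\<lambda>l. x l - y l) \<le> 1/256" "sqnorm r y \<le> 4"
      using cover[OF x_unit] by blast
    have "\<bar>quad_form r M y\<bar> \<le> 4 * \<alpha>"
      using on_net[OF y(1)] mult_left_mono[OF y(3) \<open>0 \<le> \<alpha>\<close>] by linarith
    then show ?thesis using quad_form_perturb_le[OF symmetric homog \<open>0 \<le> A\<close> x_unit y(2,3)] by linarith
  qed
  have "A \<le> 4 * \<alpha> + 11/32 * A"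
    unfolding A_def
  proof (rule cSup_least)
    show "S \<noteq> {}" using \<open>0 \<in> S\<close> by blast
    fix z assume "z \<in> S"
    then obtain x where x: "z = \<bar>quad_form r M x\<bar>" "sqnorm r x \<le> 1" unfolding S_def by blast
    have "\<bar>quad_form r M x\<bar> \<le> (4 * \<alpha> + 11/32 * A) * sqnorm r x"
      using unit by (intro quad_form_le_sqnorm_if_unit) simp
    also have "\<dots> \<le> 4 * \<alpha> + 11/32 * A"
      using x(2) \<open>0 \<le> A\<close> \<open>0 \<le> \<alpha>\<close> mult_left_mono[of "sqnorm r x" 1 "4 * \<alpha> + 11/32 * A"] by simp
    finally show "z \<le> 4 * \<alpha> + 11/32 * Sup S" using x(1) unfolding A_def by simp
  qed
  then have "A \<le> 7 * \<alpha>" using \<open>0 \<le> \<alpha>\<close> by linarith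
  then show ?thesis using homog[of u] mult_right_mono[of A "7 * \<alpha>" "sqnorm r u"] by simp
qed

lemma exp_neg_square_le: "exp (- (real m)\<^sup>2) \<le> (1/2 :: real) ^ m"
proof -
  have "real m \<le> (real m)\<^sup>2" by (cases m) (auto simp: power2_eq_square)
  then have "exp (- (real m)\<^sup>2) \<le> exp (-1) ^ m" by (simp add: exp_of_nat_mult[symmetric])
  also have "\<dots> \<le> (1/2) ^ m"
    using exp_ge_add_one_self[of 1] by (intro power_mono) (auto simp: exp_minus field_simps)
  finally show ?thesis .
qed

lemma sum_exp_neg_squares_le: "(\<Sum>k\<in>{- int N..int N}. exp (- (real_of_int k)\<^sup>2)) \<le> 3 - 2 * (1/2 :: real) ^ N"
proof (induction N)
  case (Suc N)
  have "{- int (Suc N)..int (Suc N)} = insert (int (Suc N)) (insert (- int (Suc N)) {- int N..int N})"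
    by auto
  moreover have "(real_of_int (- int (Suc N)))\<^sup>2 = (real (Suc N))\<^sup>2" "(real_of_int (int (Suc N)))\<^sup>2 = (real (Suc N))\<^sup>2"
    by (simp_all only: of_int_minus of_int_of_nat_eq power2_minus)
  ultimately have "(\<Sum>k\<in>{- int (Suc N)..int (Suc N)}. exp (- (real_of_int k)\<^sup>2)) =
      2 * exp (- (real (Suc N))\<^sup>2) + (\<Sum>k\<in>{- int N..int N}. exp (- (real_of_int k)\<^sup>2))"
    by (simp del: of_int_of_nat_eq of_int_minus)
  also have "\<dots> \<le> 3 - 2 * (1/2) ^ Suc N"
    using exp_neg_square_le[of "Suc N"] Suc.IH by simp
  finally show ?case .
qed simp

definition grid_step :: "nat \<Rightarrow> real" where
  "grid_step r = 1 / (8 * sqrt r)"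

definition grid_box :: "nat \<Rightarrow> (nat \<Rightarrow> int) set" where
  "grid_box r = (let N = nat \<lceil>2 / grid_step r\<rceil> in {..<r} \<rightarrow>\<^sub>E {- int N..int N})"

definition grid_point :: "nat \<Rightarrow> (nat \<Rightarrow> int) \<Rightarrow> nat \<Rightarrow> real" where
  "grid_point r z = (\<lambda>l. if l < r then grid_step r * of_int (z l) else 0)"

definition grid_net :: "nat \<Rightarrow> (nat \<Rightarrow> real) set" where
  "grid_net r = grid_point r ` {z \<in> grid_box r. 0 < sqnorm r (grid_point r z) \<and> sqnorm r (grid_point r z) \<le> 4}"

lemma sqnorm_grid_point: "sqnorm r (grid_point r z) = (grid_step r)\<^sup>2 * (\<Sum>l<r. (real_of_int (z l))\<^sup>2)"
  unfolding sqnorm_def grid_point_def by (simp add: power_mult_distrib sum_distrib_left)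

lemma finite_grid_net: "finite (grid_net r)"
  unfolding grid_net_def grid_box_def Let_def by (simp add: finite_PiE)

lemma grid_net_cover:
  assumes x_unit: "sqnorm r x = 1"
  shows "\<exists>y\<in>grid_net r. sqnorm r (\<lambda>l. x l - y l) \<le> 1/256 \<and> sqnorm r y \<le> 4"
proof -
  have "r \<ge> 1" using x_unit unfolding sqnorm_def by (cases r) auto
  define h where "h = grid_step r"
  have "h > 0" "h \<le> 1/8" "h\<^sup>2 = 1 / (64 * real r)"
    unfolding h_def grid_step_def using \<open>r \<ge> 1\<close> by (auto simp: field_simps power_divide)
  define z where "z = restrict (\<lambda>l. round (x l / h)) {..<r}"
  define y where "y = grid_point r z"
  have y_coord: "x l - y l = - h * (of_int (round (x l / h)) - x l / h)" if "l < r" for l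
    unfolding y_def grid_point_def z_def h_def[symmetric] using that \<open>h > 0\<close> by (simp add: field_simps)
  have "(x l - y l)\<^sup>2 \<le> (h / 2)\<^sup>2" if "l < r" for l
  proof -
    have "\<bar>x l - y l\<bar> \<le> h / 2"
      using of_int_round_abs_le[of "x l / h"] \<open>h > 0\<close> unfolding y_coord[OF that] by (simp add: abs_mult)
    then have "\<bar>x l - y l\<bar>\<^sup>2 \<le> (h / 2)\<^sup>2" by (intro power_mono) auto
    then show ?thesis by simp
  qed
  then have "sqnorm r (\<lambda>l. x l - y l) \<le> real (card {..<r}) * (h / 2)\<^sup>2"
    unfolding sqnorm_def by (intro sum_bounded_above) auto
  also have "\<dots> = 1/256" using \<open>r \<ge> 1\<close> \<open>h\<^sup>2 = _\<close> by (simp add: power_divide)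
  finally have close: "sqnorm r (\<lambda>l. x l - y l) \<le> 1/256" .
  have "sqnorm r (\<lambda>l. x l + (y l - x l)) \<le> 2 * sqnorm r x + 2 * sqnorm r (\<lambda>l. y l - x l)"
    by (rule sqnorm_add_le)
  then have y_le: "sqnorm r y \<le> 4" using x_unit close sqnorm_diff_commute[of r y x] by simp
  have "sqnorm r (\<lambda>l. y l + (x l - y l)) \<le> 2 * sqnorm r y + 2 * sqnorm r (\<lambda>l. x l - y l)"
    by (rule sqnorm_add_le)
  then have y_pos: "sqnorm r y > 0" using x_unit close by simp
  have "z \<in> grid_box r"
    unfolding grid_box_def Let_def h_def[symmetric]
  proof (rule PiE_I)
    fix l assume "l \<in> {..<r}"
    have "\<bar>x l\<bar> \<le> 1" using abs_coord_le_1[of r x l] x_unit \<open>l \<in> {..<r}\<close> by simp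
    have "\<bar>real_of_int (round (x l / h))\<bar> \<le> \<bar>x l / h\<bar> + 1/2"
      using of_int_round_abs_le[of "x l / h"] by linarith
    also have "\<dots> \<le> 1 / h + 1/2" using \<open>\<bar>x l\<bar> \<le> 1\<close> \<open>h > 0\<close> by (simp add: abs_div divide_right_mono)
    also have "\<dots> \<le> 2 / h" using \<open>h > 0\<close> \<open>h \<le> 1/8\<close> by (simp add: field_simps)
    finally have "\<bar>round (x l / h)\<bar> \<le> int (nat \<lceil>2 / h\<rceil>)" by linarith
    then show "z l \<in> {- int (nat \<lceil>2 / h\<rceil>)..int (nat \<lceil>2 / h\<rceil>)}" unfolding z_def using \<open>l \<in> {..<r}\<close> by auto
  qed (simp add: z_def)
  then have "y \<in> grid_net r" unfolding grid_net_def y_def using y_le y_pos y_def by blast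
  then show ?thesis using close y_le by blast
qed

text \<open>Each lattice point \<open>z\<close> of the net has \<open>|z|\<^sup>2 \<le> 256 r\<close>, so the net has at most
  \<open>\<Sum>\<^sub>z exp (256 r - |z|\<^sup>2)\<close> points, a sum over the box that factorizes over coordinates.\<close>

lemma card_grid_net_le: "real (card (grid_net r)) \<le> (3 * exp 256) ^ r"
proof (cases "r = 0")
  case True
  then have "grid_net r \<subseteq> {grid_point 0 (\<lambda>_. undefined)}"
    unfolding grid_net_def grid_box_def by auto
  then have "card (grid_net r) \<le> 1" using card_mono[of "{grid_point 0 (\<lambda>_. undefined)}"] by fastforce
  then show ?thesis using True by simp
next
  case False
  define T where "T = {z \<in> grid_box r. 0 < sqnorm r (grid_point r z) \<and> sqnorm r (grid_point r z) \<le> 4}"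
  define N where "N = nat \<lceil>2 / grid_step r\<rceil>"
  have "finite (grid_box r)" unfolding grid_box_def Let_def by (simp add: finite_PiE)
  have step_sq: "(grid_step r)\<^sup>2 = 1 / (64 * real r)"
    unfolding grid_step_def using False by (simp add: power_divide power_mult_distrib)
  have "real (card (grid_net r)) \<le> real (card T)"
    unfolding grid_net_def T_def[symmetric] using \<open>finite (grid_box r)\<close> T_def by (simp add: card_image_le)
  also have "\<dots> = (\<Sum>z\<in>T. 1)" by simp
  also have "\<dots> \<le> (\<Sum>z\<in>T. exp (256 * r - (\<Sum>l<r. (real_of_int (z l))\<^sup>2)))"
  proof (intro sum_mono)
    fix z assume "z \<in> T"
    then have "(grid_step r)\<^sup>2 * (\<Sum>l<r. (real_of_int (z l))\<^sup>2) \<le> 4" unfolding T_def sqnorm_grid_point by simp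
    then have "(\<Sum>l<r. (real_of_int (z l))\<^sup>2) \<le> 256 * r" unfolding step_sq using False by (simp add: field_simps)
    then show "1 \<le> exp (256 * r - (\<Sum>l<r. (real_of_int (z l))\<^sup>2))" by simp
  qed
  also have "\<dots> \<le> (\<Sum>z\<in>grid_box r. exp (256 * r - (\<Sum>l<r. (real_of_int (z l))\<^sup>2)))"
    using \<open>finite (grid_box r)\<close> by (intro sum_mono2) (auto simp: T_def)
  also have "\<dots> = exp (256 * r) * (\<Sum>z\<in>{..<r} \<rightarrow>\<^sub>E {- int N..int N}. \<Prod>l<r. exp (- (real_of_int (z l))\<^sup>2))"
    unfolding grid_box_def Let_def N_def[symmetric] sum_distrib_left
    by (intro sum.cong refl) (simp only: diff_conv_add_uminus sum_negf[symmetric] exp_add exp_sum finite_lessThan)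
  also have "\<dots> = exp (256 * r) * (\<Sum>k\<in>{- int N..int N}. exp (- (real_of_int k)\<^sup>2)) ^ r"
    by (subst prod_sum_PiE[symmetric]) auto
  also have "\<dots> \<le> exp (256 * r) * 3 ^ r"
    using sum_exp_neg_squares_le[of N]
    by (intro mult_left_mono power_mono) (auto intro: sum_nonneg order_trans)
  also have "\<dots> = (3 * exp 256) ^ r"
    by (simp add: power_mult_distrib exp_of_nat_mult[symmetric] mult.commute)
  finally show ?thesis .
qed

lemma card_grid_net_mult_exp_le:
  assumes "r \<le> d" "0 < d" "0 < \<delta>" "\<delta> \<le> 1" and m: "262 * (real d + ln (1 / \<delta>)) \<le> m"
  shows "real (card (grid_net r)) * (3 * exp (- m)) \<le> \<delta> / 2"
proof -
  have "3 \<le> exp (2::real)" using exp_lower_Taylor_quadratic[of 2] by simp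
  moreover have "exp (258::real) = exp 2 * exp 256" by (simp flip: exp_add)
  ultimately have "3 * exp 256 \<le> exp (258::real)" by simp
  have "real (card (grid_net r)) \<le> (3 * exp 256) ^ r" by (rule card_grid_net_le)
  also have "\<dots> \<le> exp 258 ^ r" by (intro power_mono) (use \<open>3 * exp 256 \<le> _\<close> in auto)
  also have "\<dots> = exp (258 * real r)" by (simp add: exp_of_nat_mult[symmetric] mult.commute)
  also have "\<dots> \<le> exp (258 * real d)" using \<open>r \<le> d\<close> by simp
  finally have "real (card (grid_net r)) * (3 * exp (- m)) \<le> exp (258 * real d) * (3 * exp (- m))"
    by (intro mult_right_mono) auto
  also have "\<dots> \<le> 3 * exp (- 4 - ln (1 / \<delta>))"
  proof -
    have "1 \<le> real d" "0 \<le> ln (1 / \<delta>)" using \<open>0 < d\<close> \<open>0 < \<delta>\<close> \<open>\<delta> \<le> 1\<close> by auto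
    then have "258 * real d + - m \<le> - 4 - ln (1 / \<delta>)" using m unfolding distrib_left by linarith
    then show ?thesis by (simp flip: exp_add)
  qed
  also have "\<dots> = 3 * exp (- 4) * \<delta>" using \<open>0 < \<delta>\<close> by (simp add: exp_diff exp_minus)
  also have "\<dots> \<le> \<delta> / 2"
  proof -
    have "4 \<le> exp (2::real)" using exp_lower_Taylor_quadratic[of 2] by simp
    then have "16 \<le> exp (2::real) * exp 2" using mult_mono[of 4 "exp 2" 4 "exp (2::real)"] by simp
    then have "exp (- 4::real) \<le> 1/16" by (simp add: exp_minus field_simps flip: exp_add)
    then show ?thesis using \<open>0 < \<delta>\<close> by simp
  qed
  finally show ?thesis .
qed

lemma weighted_squares_bound_from_grid_net:
  assumes "0 \<le> \<alpha>"
    and on_net: "\<And>y. y \<in> grid_net r \<Longrightarrow> \<bar>(\<Sum>i<n. w i * (dotp r y (Z i))\<^sup>2) - t * sqnorm r y\<bar> \<le> \<alpha> * sqnorm r y"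
  shows "\<bar>(\<Sum>i<n. w i * (dotp r u (Z i))\<^sup>2) - t * sqnorm r u\<bar> \<le> 7 * \<alpha> * sqnorm r u"
proof -
  define M where "M l l' = (\<Sum>i<n. w i * (Z i l * Z i l')) - t * (if l = l' then 1 else 0)" for l l'
  have quad_M: "quad_form r M v = (\<Sum>i<n. w i * (dotp r v (Z i))\<^sup>2) - t * sqnorm r v" for v
    unfolding M_def by (simp add: quad_form_diff quad_form_sum quad_form_scale quad_form_outer quad_form_identity)
  have "symmetric_mat r M" unfolding symmetric_mat_def M_def by (simp add: mult.commute)
  from quad_form_bound_from_net[OF this grid_net_cover, of \<alpha>] on_net \<open>0 \<le> \<alpha>\<close>
  show ?thesis unfolding quad_M by blast
qed

section \<open>Whitening and the good event\<close>

context subgauss_setting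
begin

definition atypical :: "nat \<Rightarrow> real \<Rightarrow> (nat \<Rightarrow> real) \<Rightarrow> (nat \<Rightarrow> nat \<Rightarrow> real) set" where
  "atypical n \<epsilon> a = {X \<in> space (samples n).
     real n * (1 + 4 * exp 1 * c * (\<epsilon> * ln (1 / \<epsilon>))) * quad_form d \<Sigma> a \<le> (\<Sum>i<n. (dotp d a (X i))\<^sup>2) \<or>
     (\<Sum>i<n. (dotp d a (X i))\<^sup>2) \<le> real n * (1 - 4 * exp 1 * c * (\<epsilon> * ln (1 / \<epsilon>))) * quad_form d \<Sigma> a \<or>
     real n * \<epsilon> * (12 * exp 1 * c * quad_form d \<Sigma> a) \<le>
       (\<Sum>i<n. max 0 ((dotp d a (X i))\<^sup>2 - 2 * exp 1 * c * quad_form d \<Sigma> a * ln (1 / \<epsilon>)))}"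

lemma sets_atypical [measurable]: "atypical n \<epsilon> a \<in> sets (samples n)"
  unfolding atypical_def by measurable

lemma prob_atypical_le:
  assumes "quad_form d \<Sigma> a > 0" "0 < \<epsilon>" "\<epsilon> \<le> 1/2"
  shows "measure (samples n) (atypical n \<epsilon> a) \<le> 3 * exp (- real n * (\<epsilon> * ln (1 / \<epsilon>))\<^sup>2)"
proof -
  define x0 where "x0 = \<epsilon> * ln (1 / \<epsilon>)"
  define \<alpha> where "\<alpha> = 4 * exp 1 * c * x0"
  have "0 < x0" "x0 \<le> 1" "x0\<^sup>2 \<le> 2 * \<epsilon>"
    unfolding x0_def using assms ln_inverse_ge_two_thirds mult_ln_inverse_le_1 mult_ln_inverse_squared_le
    by (auto intro!: mult_pos_pos)
  have "0 < \<alpha>" "\<alpha> \<le> 4 * exp 1 * c" unfolding \<alpha>_def using c_pos \<open>0 < x0\<close> \<open>x0 \<le> 1\<close> by auto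
  let ?P = "samples n"
  let ?bound = "exp (- real n * x0\<^sup>2)"
  interpret P: prob_space ?P by (intro prob_space_PiM prob_space_axioms)
  have atypical_eq: "atypical n \<epsilon> a = {X \<in> space ?P. real n * (1 + \<alpha>) * quad_form d \<Sigma> a \<le> (\<Sum>i<n. (dotp d a (X i))\<^sup>2)} \<union>
      {X \<in> space ?P. (\<Sum>i<n. (dotp d a (X i))\<^sup>2) \<le> real n * (1 - \<alpha>) * quad_form d \<Sigma> a} \<union>
      {X \<in> space ?P. real n * \<epsilon> * (12 * exp 1 * c * quad_form d \<Sigma> a) \<le>
        (\<Sum>i<n. max 0 ((dotp d a (X i))\<^sup>2 - 2 * exp 1 * c * quad_form d \<Sigma> a * ln (1 / \<epsilon>)))}"
    (is "_ = ?B1 \<union> ?B2 \<union> ?B3") unfolding atypical_def \<alpha>_def x0_def by auto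
  have "measure ?P ?B1 \<le> ?bound"
  proof -
    have "- real n * \<alpha>\<^sup>2 / (16 * (exp 1)\<^sup>2 * c\<^sup>2) = - real n * x0\<^sup>2"
      unfolding \<alpha>_def using c_pos by (simp add: field_simps power2_eq_square)
    then show ?thesis using emeasure_sum_squares_upper_tail[OF assms(1) \<open>0 < \<alpha>\<close> \<open>\<alpha> \<le> _\<close>, of n]
      unfolding measure_def by (intro enn2real_leI) simp_all
  qed
  moreover have "measure ?P ?B2 \<le> ?bound"
  proof -
    have "- real n * \<alpha>\<^sup>2 / (8 * (exp 1)\<^sup>2 * c\<^sup>2) = 2 * (- real n * x0\<^sup>2)"
      unfolding \<alpha>_def using c_pos by (simp add: field_simps power2_eq_square)
    then have "exp (- real n * \<alpha>\<^sup>2 / (8 * (exp 1)\<^sup>2 * c\<^sup>2)) \<le> ?bound" by simp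
    then show ?thesis using emeasure_sum_squares_lower_tail[OF assms(1) \<open>0 < \<alpha>\<close>, of n]
      unfolding measure_def by (intro enn2real_leI) (auto intro: order_trans ennreal_leI)
  qed
  moreover have "measure ?P ?B3 \<le> ?bound"
  proof -
    have "real n * x0\<^sup>2 \<le> real n * (3 * \<epsilon>)" using \<open>x0\<^sup>2 \<le> 2 * \<epsilon>\<close> \<open>0 < \<epsilon>\<close> by (intro mult_left_mono) auto
    then have "exp (- 3 * real n * \<epsilon>) \<le> ?bound" by simp
    then show ?thesis using emeasure_sum_excess_tail[OF assms(1) \<open>0 < \<epsilon>\<close>, of n]
      unfolding measure_def by (intro enn2real_leI) (auto intro: order_trans ennreal_leI)
  qed
  moreover have "measure ?P (?B1 \<union> ?B2 \<union> ?B3) \<le> measure ?P ?B1 + measure ?P ?B2 + measure ?P ?B3"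
    by (intro order_trans[OF measure_Un_le] add_mono measure_Un_le) auto
  ultimately have "measure ?P (?B1 \<union> ?B2 \<union> ?B3) \<le> 3 * ?bound" by linarith
  then show ?thesis unfolding atypical_eq x0_def .
qed

end

locale whitened = subgauss_setting +
  fixes r :: nat and b :: "nat \<Rightarrow> nat \<Rightarrow> real"
  assumes r_le_d: "r \<le> d" and orthonormal: "orthonormal d \<Sigma> r b" and parseval: "\<And>v. parseval d \<Sigma> r b v"
begin

definition coords :: "(nat \<Rightarrow> real) \<Rightarrow> nat \<Rightarrow> real" where
  "coords v = (\<lambda>l. bilin d \<Sigma> v (b l))"

definition whiten :: "(nat \<Rightarrow> real) \<Rightarrow> nat \<Rightarrow> real" where
  "whiten x = (\<lambda>l. dotp d (b l) x)"

definition lincomb :: "(nat \<Rightarrow> real) \<Rightarrow> nat \<Rightarrow> real" where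
  "lincomb u = (\<lambda>i. \<Sum>l<r. u l * b l i)"

definition residual :: "nat \<Rightarrow> nat \<Rightarrow> real" where
  "residual j = (\<lambda>i. basis_vec j i - lincomb (coords (basis_vec j)) i)"

lemma quad_form_eq_sqnorm_coords: "quad_form d \<Sigma> v = sqnorm r (coords v)"
proof -
  have "quad_form d \<Sigma> v = (\<Sum>l<r. bilin d \<Sigma> v (b l) * bilin d \<Sigma> (b l) v)"
    using parseval[of v] unfolding parseval_def quad_form_eq_bilin by blast
  also have "\<dots> = sqnorm r (coords v)"
    unfolding sqnorm_def coords_def power2_eq_square
    using bilin_commute[OF \<Sigma>_symmetric] by (intro sum.cong) auto
  finally show ?thesis .
qed

lemma quad_form_lincomb: "quad_form d \<Sigma> (lincomb u) = sqnorm r u"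
proof -
  have "bilin d \<Sigma> (b l) (lincomb u) = u l" if "l < r" for l
  proof -
    have "bilin d \<Sigma> (b l) (lincomb u) = (\<Sum>l'<r. u l' * bilin d \<Sigma> (b l) (b l'))"
      unfolding lincomb_def by (simp add: bilin_right_linear)
    also have "\<dots> = (\<Sum>l'<r. if l' = l then u l' else 0)"
      using orthonormal that unfolding orthonormal_def by (intro sum.cong) auto
    finally show ?thesis using that by simp
  qed
  then show ?thesis
    unfolding quad_form_eq_bilin sqnorm_def power2_eq_square
    by (simp add: lincomb_def bilin_left_linear)
qed

lemma dotp_lincomb: "dotp d (lincomb u) x = dotp r u (whiten x)"
  unfolding lincomb_def whiten_def dotp_def[of r] by (simp add: dotp_sum_left dotp_scale_left)

lemma AE_dotp_residual_eq_0: "AE x in D. dotp d (residual j) x = 0"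
proof -
  have "bilin d \<Sigma> (basis_vec j) (residual j) = dotp r (coords (basis_vec j)) (\<lambda>l. bilin d \<Sigma> (b l) (residual j))"
    using parseval[of "basis_vec j"] unfolding parseval_def coords_def dotp_def by blast
  then have "quad_form d \<Sigma> (residual j) = 0"
    unfolding quad_form_eq_bilin residual_def[of j] lincomb_def
    by (simp add: bilin_left_linear dotp_def)
  then have "(\<integral>\<^sup>+x. ennreal ((dotp d (residual j) x)\<^sup>2) \<partial>D) = 0"
    by (simp add: nn_integral_dotp_squared)
  then show ?thesis by (subst (asm) nn_integral_0_iff_AE) auto
qed

lemma dotp_eq_dotp_whiten:
  assumes "\<forall>j<d. dotp d (residual j) x = 0"
  shows "dotp d v x = dotp r (coords v) (whiten x)"
proof -
  have "dotp d (basis_vec j) x = dotp d (lincomb (coords (basis_vec j))) x" if "j < d" for j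
    using assms that unfolding residual_def by (simp add: dotp_diff_left)
  then have "dotp d v x = (\<Sum>j<d. v j * dotp r (coords (basis_vec j)) (whiten x))"
    by (subst dotp_eq_sum_basis_vec) (simp add: dotp_lincomb)
  also have "\<dots> = dotp r (coords v) (whiten x)"
    unfolding coords_def dotp_def[of r] bilin_eq_sum_basis_vec[of d \<Sigma> v]
    by (simp add: sum_distrib_left sum_distrib_right sum.swap[of _ "{..<r}"] mult_ac)
  finally show ?thesis .
qed

definition good_samples :: "nat \<Rightarrow> real \<Rightarrow> (nat \<Rightarrow> nat \<Rightarrow> real) set" where
  "good_samples n \<epsilon> = {X \<in> space (samples n). \<forall>i<n. \<forall>j<d. dotp d (residual j) (X i) = 0}
     - (\<Union>y\<in>grid_net r. atypical n \<epsilon> (lincomb y))"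

lemma sets_good_samples: "good_samples n \<epsilon> \<in> sets (samples n)"
proof -
  have "{X \<in> space (samples n). \<forall>i<n. \<forall>j<d. dotp d (residual j) (X i) = 0} \<in> sets (samples n)"
    by measurable
  then show ?thesis unfolding good_samples_def using finite_grid_net[of r]
    by (intro sets.Diff sets.finite_UN sets_atypical) auto
qed

lemma prob_good_samples_ge:
  assumes "0 < \<epsilon>" "\<epsilon> \<le> 1/2" "0 < \<delta>" "\<delta> \<le> 1" "0 < d"
    and sample_size: "262 * (real d + ln (1 / \<delta>)) \<le> real n * (\<epsilon> * ln (1 / \<epsilon>))\<^sup>2"
  shows "1 - \<delta> / 2 \<le> measure (samples n) (good_samples n \<epsilon>)"
proof -
  let ?P = "samples n"
  interpret P: prob_space ?P by (intro prob_space_PiM prob_space_axioms)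
  define R where "R = {X \<in> space ?P. \<forall>i<n. \<forall>j<d. dotp d (residual j) (X i) = 0}"
  define U where "U = (\<Union>y\<in>grid_net r. atypical n \<epsilon> (lincomb y))"
  have "R \<in> sets ?P" unfolding R_def by measurable
  have "U \<in> sets ?P" unfolding U_def using finite_grid_net[of r] by (intro sets.finite_UN sets_atypical) auto
  have "AE X in ?P. \<forall>i\<in>{..<n}. \<forall>j\<in>{..<d}. dotp d (residual j) (X i) = 0"
    by (intro AE_finite_allI finite_lessThan AE_PiM_component prob_space_axioms AE_dotp_residual_eq_0)
  then have "measure ?P R = 1"
    using \<open>R \<in> sets ?P\<close> unfolding R_def by (subst P.prob_Collect_eq_1) auto
  have "measure ?P U \<le> (\<Sum>y\<in>grid_net r. measure ?P (atypical n \<epsilon> (lincomb y)))"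
    unfolding U_def using finite_grid_net[of r] by (intro P.finite_measure_subadditive_finite) auto
  also have "\<dots> \<le> real (card (grid_net r)) * (3 * exp (- (real n * (\<epsilon> * ln (1 / \<epsilon>))\<^sup>2)))"
  proof (intro sum_bounded_above)
    fix y assume "y \<in> grid_net r"
    then have "quad_form d \<Sigma> (lincomb y) > 0" unfolding grid_net_def by (auto simp: quad_form_lincomb)
    then show "measure ?P (atypical n \<epsilon> (lincomb y)) \<le> 3 * exp (- (real n * (\<epsilon> * ln (1 / \<epsilon>))\<^sup>2))"
      using prob_atypical_le assms(1,2) by simp
  qed
  also have "\<dots> \<le> \<delta> / 2"
    using card_grid_net_mult_exp_le[OF r_le_d] assms by simp
  finally have "measure ?P U \<le> \<delta> / 2" .
  moreover have "measure ?P (R \<inter> U) \<le> measure ?P U"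
    using \<open>U \<in> sets ?P\<close> by (intro P.finite_measure_mono) auto
  ultimately show ?thesis
    using P.finite_measure_Diff'[OF \<open>R \<in> sets ?P\<close> \<open>U \<in> sets ?P\<close>] \<open>measure ?P R = 1\<close>
    unfolding good_samples_def R_def[symmetric] U_def[symmetric] by linarith
qed

lemma good_samplesD:
  assumes "X \<in> good_samples n \<epsilon>"
  shows "\<And>i v. i < n \<Longrightarrow> dotp d v (X i) = dotp r (coords v) (whiten (X i))"
    and "\<And>y. y \<in> grid_net r \<Longrightarrow> X \<in> space (samples n) - atypical n \<epsilon> (lincomb y)"
  using assms dotp_eq_dotp_whiten unfolding good_samples_def by auto

lemma empirical_squares_on_grid_net:
  assumes good: "X \<in> good_samples n \<epsilon>" and "0 < n" and y: "y \<in> grid_net r"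
  shows "\<bar>(\<Sum>i<n. (dotp r y (whiten (X i)))\<^sup>2) / real n - sqnorm r y\<bar> \<le>
           4 * exp 1 * c * (\<epsilon> * ln (1 / \<epsilon>)) * sqnorm r y"
proof -
  have "\<bar>(\<Sum>i<n. (dotp r y (whiten (X i)))\<^sup>2) - real n * sqnorm r y\<bar> \<le>
      real n * (4 * exp 1 * c * (\<epsilon> * ln (1 / \<epsilon>)) * sqnorm r y)"
    using good_samplesD(2)[OF good y] unfolding atypical_def
    by (auto simp: quad_form_lincomb dotp_lincomb algebra_simps)
  moreover have "(\<Sum>i<n. (dotp r y (whiten (X i)))\<^sup>2) / real n - sqnorm r y =
      ((\<Sum>i<n. (dotp r y (whiten (X i)))\<^sup>2) - real n * sqnorm r y) / real n"
    using \<open>0 < n\<close> by (simp add: diff_divide_distrib)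
  ultimately show ?thesis using \<open>0 < n\<close> by (simp add: abs_div pos_divide_le_eq mult_ac)
qed

text \<open>On the net, the squares above the threshold \<open>T\<close> exceed it by less than \<open>12 e c \<epsilon> n |y|\<^sup>2\<close> in
  total, and the weights are capped by \<open>1/(n \<epsilon>)\<close>.\<close>

lemma weighted_squares_on_grid_net:
  assumes good: "X \<in> good_samples n \<epsilon>" and "0 < \<epsilon>" "\<epsilon> \<le> 1/2" and w: "w \<in> weight_set n (1 - \<epsilon>)"
    and y: "y \<in> grid_net r"
  shows "(\<Sum>i<n. w i * (dotp r y (whiten (X i)))\<^sup>2) \<le> 26 * exp 1 * c * ln (1 / \<epsilon>) * sqnorm r y"
proof -
  define s where "s = sqnorm r y"
  define T where "T = 2 * exp 1 * c * s * ln (1 / \<epsilon>)"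
  define q where "q i = (dotp r y (whiten (X i)))\<^sup>2" for i
  have "0 \<le> s" unfolding s_def by simp
  have "2/3 \<le> ln (1 / \<epsilon>)" using assms(2,3) by (rule ln_inverse_ge_two_thirds)
  have excess: "(\<Sum>i<n. max 0 (q i - T)) < real n * \<epsilon> * (12 * exp 1 * c * s)"
    using good_samplesD(2)[OF good y] unfolding atypical_def q_def T_def s_def
    by (auto simp: quad_form_lincomb dotp_lincomb)
  then have "n > 0" using \<open>0 < \<epsilon>\<close> by (cases n) (auto simp: max_def)
  have "(\<Sum>i<n. w i * q i) \<le> T + 1 / (real n * \<epsilon>) * (\<Sum>i<n. max 0 (q i - T))"
    using w unfolding weight_set_def by (intro capped_weighted_sum_le) auto
  also have "\<dots> \<le> T + 1 / (real n * \<epsilon>) * (real n * \<epsilon> * (12 * exp 1 * c * s))"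
    using excess \<open>0 < \<epsilon>\<close> \<open>n > 0\<close> by (intro add_left_mono mult_left_mono) auto
  also have "\<dots> = T + 12 * exp 1 * c * s" using \<open>0 < \<epsilon>\<close> \<open>n > 0\<close> by simp
  also have "\<dots> \<le> 26 * exp 1 * c * ln (1 / \<epsilon>) * s"
  proof -
    have "12 * (exp 1 * c * s) \<le> 24 * ln (1 / \<epsilon>) * (exp 1 * c * s)"
      using \<open>2/3 \<le> ln (1 / \<epsilon>)\<close> c_pos \<open>0 \<le> s\<close> by (intro mult_right_mono) auto
    then show ?thesis unfolding T_def by (simp add: algebra_simps)
  qed
  finally show ?thesis unfolding q_def s_def .
qed

lemma empirical_bound_on_good_samples:
  assumes good: "X \<in> good_samples n \<epsilon>" and "0 < \<epsilon>" "\<epsilon> \<le> 1/2" "0 < n" and "28 * exp 1 * c \<le> C"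
  shows "\<bar>(\<Sum>i<n. (dotp d v (X i))\<^sup>2) / real n - quad_form d \<Sigma> v\<bar> \<le> C * \<epsilon> * ln (1 / \<epsilon>) * quad_form d \<Sigma> v"
proof -
  define x0 where "x0 = \<epsilon> * ln (1 / \<epsilon>)"
  have "0 \<le> x0" unfolding x0_def using assms(2,3) ln_inverse_ge_two_thirds by simp
  have "\<bar>(\<Sum>i<n. (1 / real n) * (dotp r y (whiten (X i)))\<^sup>2) - 1 * sqnorm r y\<bar> \<le> 4 * exp 1 * c * x0 * sqnorm r y"
    if "y \<in> grid_net r" for y
    using empirical_squares_on_grid_net[OF good \<open>0 < n\<close> that]
    unfolding x0_def by (simp add: sum_distrib_left[symmetric] divide_inverse mult_ac)
  then have "\<bar>(\<Sum>i<n. (1 / real n) * (dotp r (coords v) (whiten (X i)))\<^sup>2) - 1 * sqnorm r (coords v)\<bar>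
      \<le> 7 * (4 * exp 1 * c * x0) * sqnorm r (coords v)"
    using c_pos \<open>0 \<le> x0\<close> by (intro weighted_squares_bound_from_grid_net) auto
  moreover have "(\<Sum>i<n. (dotp d v (X i))\<^sup>2) = (\<Sum>i<n. (dotp r (coords v) (whiten (X i)))\<^sup>2)"
    by (intro sum.cong refl) (simp add: good_samplesD(1)[OF good])
  ultimately have "\<bar>(\<Sum>i<n. (dotp d v (X i))\<^sup>2) / real n - quad_form d \<Sigma> v\<bar> \<le> 28 * exp 1 * c * x0 * quad_form d \<Sigma> v"
    unfolding quad_form_eq_sqnorm_coords by (simp add: sum_distrib_left[symmetric] divide_inverse mult_ac)
  also have "\<dots> \<le> C * x0 * quad_form d \<Sigma> v"
    using \<open>28 * exp 1 * c \<le> C\<close> \<open>0 \<le> x0\<close> \<Sigma>_psd[of v] by (intro mult_right_mono) auto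
  finally show ?thesis unfolding x0_def by (simp add: mult.assoc)
qed

lemma weighted_bound_on_good_samples:
  assumes good: "X \<in> good_samples n \<epsilon>" and "0 < \<epsilon>" "\<epsilon> \<le> 1/2" and w: "w \<in> weight_set n (1 - \<epsilon>)"
    and "182 * exp 1 * c \<le> C"
  shows "(\<Sum>i<n. w i * (dotp d v (X i))\<^sup>2) \<le> C * ln (1 / \<epsilon>) * quad_form d \<Sigma> v"
proof -
  have "2/3 \<le> ln (1 / \<epsilon>)" using assms(2,3) by (rule ln_inverse_ge_two_thirds)
  have "0 \<le> (\<Sum>i<n. w i * (dotp r y (whiten (X i)))\<^sup>2)" for y
    using w unfolding weight_set_def by (intro sum_nonneg) auto
  then have "\<bar>(\<Sum>i<n. w i * (dotp r y (whiten (X i)))\<^sup>2) - 0 * sqnorm r y\<bar> \<le> 26 * exp 1 * c * ln (1 / \<epsilon>) * sqnorm r y"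
    if "y \<in> grid_net r" for y
    using weighted_squares_on_grid_net[OF good assms(2,3) w that] by simp
  then have "\<bar>(\<Sum>i<n. w i * (dotp r (coords v) (whiten (X i)))\<^sup>2) - 0 * sqnorm r (coords v)\<bar>
      \<le> 7 * (26 * exp 1 * c * ln (1 / \<epsilon>)) * sqnorm r (coords v)"
    using c_pos \<open>2/3 \<le> ln (1 / \<epsilon>)\<close> by (intro weighted_squares_bound_from_grid_net) auto
  moreover have "(\<Sum>i<n. w i * (dotp d v (X i))\<^sup>2) = (\<Sum>i<n. w i * (dotp r (coords v) (whiten (X i)))\<^sup>2)"
    by (intro sum.cong refl) (simp add: good_samplesD(1)[OF good])
  ultimately have "(\<Sum>i<n. w i * (dotp d v (X i))\<^sup>2) \<le> 182 * exp 1 * c * ln (1 / \<epsilon>) * quad_form d \<Sigma> v"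
    unfolding quad_form_eq_sqnorm_coords by (simp add: mult_ac)
  also have "\<dots> \<le> C * ln (1 / \<epsilon>) * quad_form d \<Sigma> v"
    using \<open>182 * exp 1 * c \<le> C\<close> \<open>2/3 \<le> ln (1 / \<epsilon>)\<close> \<Sigma>_psd[of v] by (intro mult_right_mono) auto
  finally show ?thesis .
qed

end

context subgauss_setting
begin

lemma covariance_concentration:
  assumes "0 < \<epsilon>" "\<epsilon> \<le> 1/2" "0 < \<delta>" "\<delta> \<le> 1"
    and sample_size: "real n \<ge> 262 * (real d + ln (1 / \<delta>)) / (\<epsilon> * ln (1 / \<epsilon>))\<^sup>2"
    and C: "182 * exp 1 * c + 2 \<le> C"
  shows "\<exists>A \<in> sets (\<Pi>\<^sub>M i\<in>{..<n}. D).
       1 - \<delta> / 2 \<le> measure (\<Pi>\<^sub>M i\<in>{..<n}. D) A \<and>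
       (\<forall>X\<in>A.
          loewner_le d
            (\<lambda>j k. (1 / real n) * (\<Sum>i<n. X i j * X i k) - \<Sigma> j k)
            (\<lambda>j k. C * \<epsilon> * ln (1 / \<epsilon>) * \<Sigma> j k) \<and>
          loewner_le d
            (\<lambda>j k. - (C * \<epsilon> * ln (1 / \<epsilon>) * \<Sigma> j k))
            (\<lambda>j k. (1 / real n) * (\<Sum>i<n. X i j * X i k) - \<Sigma> j k) \<and>
          (\<forall>w\<in>weight_set n (1 - \<epsilon>).
             loewner_le d
               (\<lambda>j k. \<Sum>i<n. w i * (X i j * X i k - \<Sigma> j k))
               (\<lambda>j k. C * ln (1 / \<epsilon>) * \<Sigma> j k) \<and>
             loewner_le d
               (\<lambda>j k. - (C * ln (1 / \<epsilon>) * \<Sigma> j k))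
               (\<lambda>j k. \<Sum>i<n. w i * (X i j * X i k - \<Sigma> j k))))"
proof (cases "d = 0")
  case True
  interpret P: prob_space "samples n" by (intro prob_space_PiM prob_space_axioms)
  show ?thesis
    using \<open>0 < \<delta>\<close> by (intro bexI[of _ "space (samples n)"]) (auto simp: True loewner_le_def quad_form_def P.prob_space)
next
  case False
  have "0 \<le> bilin d \<Sigma> v v" for v using \<Sigma>_psd[of v] by (simp add: quad_form_eq_bilin)
  then obtain r b where "r \<le> d" "orthonormal d \<Sigma> r b" "\<And>v. parseval d \<Sigma> r b v"
    using gram_schmidt[OF \<Sigma>_symmetric] by blast
  then interpret whitened c d D \<Sigma> \<Gamma> r b by unfold_locales
  define x0 where "x0 = \<epsilon> * ln (1 / \<epsilon>)"
  have "2/3 \<le> ln (1 / \<epsilon>)" using assms(1,2) by (rule ln_inverse_ge_two_thirds)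
  then have "0 < x0" unfolding x0_def using assms(1,2) by (intro mult_pos_pos) auto
  then have "0 < x0\<^sup>2" by simp
  then have size: "262 * (real d + ln (1 / \<delta>)) \<le> real n * x0\<^sup>2"
    using sample_size unfolding x0_def by (simp add: pos_divide_le_eq)
  moreover have "0 \<le> ln (1 / \<delta>)" using \<open>0 < \<delta>\<close> \<open>\<delta> \<le> 1\<close> by simp
  then have "0 < 262 * (real d + ln (1 / \<delta>))" using False by simp
  ultimately have "0 < n" by (cases n) auto
  have "0 < exp 1 * c" using c_pos by simp
  then have "28 * exp 1 * c \<le> C" "182 * exp 1 * c \<le> C" "2 \<le> C"
    using C unfolding mult.assoc by linarith+
  then have "2 * (2/3) \<le> C * ln (1 / \<epsilon>)"
    using \<open>2/3 \<le> ln (1 / \<epsilon>)\<close> by (intro mult_mono) auto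
  then have "1 \<le> C * ln (1 / \<epsilon>)" by simp
  show ?thesis
  proof (intro bexI conjI ballI)
    show "good_samples n \<epsilon> \<in> sets (samples n)" by (rule sets_good_samples)
    show "1 - \<delta> / 2 \<le> measure (samples n) (good_samples n \<epsilon>)"
      using prob_good_samples_ge assms(1-4) False size unfolding x0_def by simp
    fix X assume good: "X \<in> good_samples n \<epsilon>"
    show "loewner_le d (\<lambda>j k. (1 / real n) * (\<Sum>i<n. X i j * X i k) - \<Sigma> j k)
        (\<lambda>j k. C * \<epsilon> * ln (1 / \<epsilon>) * \<Sigma> j k)"
      and "loewner_le d (\<lambda>j k. - (C * \<epsilon> * ln (1 / \<epsilon>) * \<Sigma> j k))
        (\<lambda>j k. (1 / real n) * (\<Sum>i<n. X i j * X i k) - \<Sigma> j k)"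
      using empirical_bound_on_good_samples[OF good assms(1,2) \<open>0 < n\<close> \<open>28 * exp 1 * c \<le> C\<close>]
      by (rule loewner_empirical_cov_bounds)+
    fix w assume w: "w \<in> weight_set n (1 - \<epsilon>)"
    then have "\<And>i. i < n \<Longrightarrow> 0 \<le> w i" "(\<Sum>i<n. w i) = 1" unfolding weight_set_def by auto
    then show "loewner_le d (\<lambda>j k. \<Sum>i<n. w i * (X i j * X i k - \<Sigma> j k)) (\<lambda>j k. C * ln (1 / \<epsilon>) * \<Sigma> j k)"
      and "loewner_le d (\<lambda>j k. - (C * ln (1 / \<epsilon>) * \<Sigma> j k)) (\<lambda>j k. \<Sum>i<n. w i * (X i j * X i k - \<Sigma> j k))"
      using weighted_bound_on_good_samples[OF good assms(1,2) w \<open>182 * exp 1 * c \<le> C\<close>]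
        \<Sigma>_psd \<open>1 \<le> C * ln (1 / \<epsilon>)\<close> by (blast intro: loewner_weighted_cov_bounds)+
  qed
qed

end

theorem lemma11:
  fixes c :: real
  assumes "c > 0"
  shows "\<exists>K>0. \<exists>C4>0. \<forall>(d::nat) (D::(nat \<Rightarrow> real) measure) \<Sigma> \<Gamma> (\<epsilon>::real) (\<delta>::real) (n::nat).
    subgauss_model c d D \<Sigma> \<Gamma> \<and> 0 < \<epsilon> \<and> \<epsilon> \<le> 1/2 \<and> 0 < \<delta> \<and> \<delta> \<le> 1 \<and>
    real n \<ge> K * (real d + ln (1 / \<delta>)) / (\<epsilon> * ln (1 / \<epsilon>))\<^sup>2 \<longrightarrow>
    (\<exists>A \<in> sets (\<Pi>\<^sub>M i\<in>{..<n}. D).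
       1 - \<delta> / 2 \<le> measure (\<Pi>\<^sub>M i\<in>{..<n}. D) A \<and>
       (\<forall>X\<in>A.
          loewner_le d
            (\<lambda>j k. (1 / real n) * (\<Sum>i<n. X i j * X i k) - \<Sigma> j k)
            (\<lambda>j k. C4 * \<epsilon> * ln (1 / \<epsilon>) * \<Sigma> j k) \<and>
          loewner_le d
            (\<lambda>j k. - (C4 * \<epsilon> * ln (1 / \<epsilon>) * \<Sigma> j k))
            (\<lambda>j k. (1 / real n) * (\<Sum>i<n. X i j * X i k) - \<Sigma> j k) \<and>
          (\<forall>w\<in>weight_set n (1 - \<epsilon>).
             loewner_le d
               (\<lambda>j k. \<Sum>i<n. w i * (X i j * X i k - \<Sigma> j k))
               (\<lambda>j k. C4 * ln (1 / \<epsilon>) * \<Sigma> j k) \<and>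
             loewner_le d
               (\<lambda>j k. - (C4 * ln (1 / \<epsilon>) * \<Sigma> j k))
               (\<lambda>j k. \<Sum>i<n. w i * (X i j * X i k - \<Sigma> j k)))))"
proof (rule exI[of _ 262], intro conjI exI[of _ "182 * exp 1 * c + 2"] allI impI, goal_cases)
  case 2
  show ?case using \<open>c > 0\<close> by (simp add: add_pos_pos)
next
  case (3 d D \<Sigma> \<Gamma> \<epsilon> \<delta> n)
  interpret subgauss_setting c d D \<Sigma> \<Gamma> using 3 \<open>c > 0\<close> by unfold_locales auto
  show ?case using 3 by (intro covariance_concentration) auto
qed simp

end
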